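(* Let $G$ be a directed acyclic graph with $n$ vertices, including special vertices $s$ and $t$, in which each edge $e$ carries a weight function $w_e(x)=a_e x+b_e$ ($a_e,b_e\in\mathbb{R}$). For an $s$-$t$ path $P=(e_1,\dots,e_r)$ let $\mathsf{cost}(P)(x)=w_{e_r}(w_{e_{r-1}}(\cdots w_{e_1}(x)\cdots))$, and let $\mathcal{P}$ be the set of $s$-$t$ paths in $G$. Then $\mathsf{cost}_G(x)=\min_{P\in\mathcal{P}}\mathsf{cost}(P)(x)$ is a piecewise linear function of $x\in\mathbb{R}$ whose number of pieces $p(\mathsf{cost}_G)$ satisfies $p(\mathsf{cost}_G)\le n^{\log n+O(1)}$.
   Context: For a piecewise linear function $f:\mathbb{R}\to\mathbb{R}$, $p(f)$ denotes its number of (maximal linear) pieces. Logarithms are base 2. *)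

theory Defs
  imports "HOL-Analysis.Analysis"
begin

text \<open>A DAG is given by a vertex set V (of naturals) and an edge relation E \<subseteq> V \<times> V,
  acyclic in the library sense. Edge (u,v) carries the weight w(x) = a u v * x + b u v.\<close>

definition st_paths :: "(nat \<times> nat) set \<Rightarrow> nat \<Rightarrow> nat \<Rightarrow> nat list set" where
  "st_paths E s t = {p. p \<noteq> [] \<and> hd p = s \<and> last p = t \<and>
      (\<forall>i. Suc i < length p \<longrightarrow> (p ! i, p ! Suc i) \<in> E)}"

definition path_cost :: "(nat \<Rightarrow> nat \<Rightarrow> real) \<Rightarrow> (nat \<Rightarrow> nat \<Rightarrow> real) \<Rightarrow> nat list \<Rightarrow> real \<Rightarrow> real" where
  "path_cost a b p x = foldl (\<lambda>y (u, v). a u v * y + b u v) x (zip p (tl p))"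

definition cost_G :: "(nat \<Rightarrow> nat \<Rightarrow> real) \<Rightarrow> (nat \<Rightarrow> nat \<Rightarrow> real) \<Rightarrow> (nat \<times> nat) set \<Rightarrow> nat \<Rightarrow> nat \<Rightarrow> real \<Rightarrow> real" where
  "cost_G a b E s t x = Min ((\<lambda>p. path_cost a b p x) ` st_paths E s t)"

definition pl_partition :: "(real \<Rightarrow> real) \<Rightarrow> nat \<Rightarrow> bool" where
  "pl_partition f k \<longleftrightarrow> (\<exists>I :: nat \<Rightarrow> real set.
      (\<Union>i<k. I i) = UNIV \<and>
      (\<forall>i<k. is_interval (I i) \<and> (\<exists>c d. \<forall>x\<in>I i. f x = c * x + d)))"

definition piecewise_linear :: "(real \<Rightarrow> real) \<Rightarrow> bool" where
  "piecewise_linear f \<longleftrightarrow> (\<exists>k. pl_partition f k)"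

text \<open>p(f): number of (maximal linear) pieces = least number of affine interval pieces.\<close>
definition num_pieces :: "(real \<Rightarrow> real) \<Rightarrow> nat" where
  "num_pieces f = (LEAST k. pl_partition f k)"

end

theory Submission
  imports Defs "HOL-Library.Log_Nat"
begin

text \<open>
  The cost function is the lower envelope of the affine maps of the s-t paths, so it is concave
  and has one piece more than it has kinks. Choose a predecessor-closed set D containing half of
  the vertices. If s is in D and t is not, every path leaves D through a crossing edge (u, v);
  since the v-t part of a path acts affinely on the cost at u, an optimal path reaches u at the
  least or at the greatest possible cost. So the cost is the minimum, over the crossing edges and
  these two choices, of cost(v, t) composed with an affine map and with the minimal or maximal
  cost to u. The inner function is concave or convex and therefore takes each value at most twice
  away from its flat parts, so the composition has at most K + 2K breakpoints when both factors
  have at most K. The minimum of J such functions has at most J (3K + 1) affine pieces, hence,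
  being concave, at most that many breakpoints. With at most 4^k crossing edges this gives the
  recursion break_bound (k + 1) = 2 4^k (3 break_bound k + 1) for graphs with at most 2^k
  vertices, and break_bound k < 2^(k^2 + 2k) <= n^(log n + 8) when k is the ceiling of log n.
\<close>

section \<open>Breakpoints and affine pieces\<close>

definition pl_breaks :: "(real \<Rightarrow> real) \<Rightarrow> real set \<Rightarrow> bool" where
  "pl_breaks f B \<longleftrightarrow> finite B \<and>
     (\<forall>x y. x < y \<longrightarrow> {x<..<y} \<inter> B = {} \<longrightarrow> (\<exists>c d. \<forall>z\<in>{x..y}. f z = c * z + d))"

definition pl_bound :: "(real \<Rightarrow> real) \<Rightarrow> nat \<Rightarrow> bool" where
  "pl_bound f K \<longleftrightarrow> (\<exists>B. pl_breaks f B \<and> card B \<le> K)"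

definition affine_pieces :: "(real \<Rightarrow> real) \<Rightarrow> (real \<times> real) set" where
  "affine_pieces f = {(c, d). \<exists>p q. p < q \<and> (\<forall>z\<in>{p..q}. f z = c * z + d)}"

lemma pl_boundI: "pl_breaks f B \<Longrightarrow> card B \<le> K \<Longrightarrow> pl_bound f K"
  unfolding pl_bound_def by blast

lemma pl_bound_mono: "pl_bound f K \<Longrightarrow> K \<le> K' \<Longrightarrow> pl_bound f K'"
  unfolding pl_bound_def by fastforce

lemma affine_pieces_intro: "p < q \<Longrightarrow> \<forall>z\<in>{p..q}. f z = c * z + d \<Longrightarrow> (c, d) \<in> affine_pieces f"
  unfolding affine_pieces_def by blast

lemma affine_coeffs_unique:
  fixes c d c' d' :: real
  assumes "max p p' < min q q'"
    and "\<forall>z\<in>{p..q}. f z = c * z + d" and "\<forall>z\<in>{p'..q'}. f z = c' * z + d'"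
  shows "(c, d) = (c', d')"
proof -
  define l r where "l = max p p'" and "r = min q q'"
  have "l \<in> {p..q} \<inter> {p'..q'}" "r \<in> {p..q} \<inter> {p'..q'}"
    using assms(1) by (auto simp: l_def r_def)
  then have at_l: "c * l + d = c' * l + d'" and "c * r + d = c' * r + d'"
    using assms(2,3) by (metis IntD1 IntD2)+
  then have "(c - c') * (r - l) = 0"
    by (simp add: algebra_simps)
  moreover have "l < r"
    using assms(1) by (simp add: l_def r_def)
  ultimately have "c = c'"
    by simp
  with at_l show ?thesis
    by simp
qed

lemma interval_avoiding_finite:
  fixes B :: "real set"
  assumes "finite B" and "p < q"
  obtains q' where "p < q'" "q' \<le> q" "{p<..<q'} \<inter> B = {}"
proof -
  define q' where "q' = Min (insert q {b\<in>B. p < b})"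
  have "p < q'" "q' \<le> q"
    using assms by (auto simp: q'_def)
  moreover have "{p<..<q'} \<inter> B = {}"
    using assms by (auto simp: q'_def)
  ultimately show thesis
    by (rule that)
qed

lemma affine_piece_in_gap:
  assumes "finite B" "g \<in> affine_pieces f"
  shows "\<exists>z p q. p < z \<and> z < q \<and> {p<..<q} \<inter> B = {} \<and> (\<forall>w\<in>{p..q}. f w = fst g * w + snd g)"
proof -
  obtain p q where "p < q" and g: "\<forall>w\<in>{p..q}. f w = fst g * w + snd g"
    using assms(2) by (cases g) (auto simp: affine_pieces_def)
  obtain q' where "p < q'" "q' \<le> q" "{p<..<q'} \<inter> B = {}"
    using \<open>p < q\<close> by (rule interval_avoiding_finite[OF assms(1)])
  then show ?thesis
    using g by (intro exI[of _ "(p + q') / 2"] exI[of _ p] exI[of _ q']) auto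
qed

lemma Ico_disjoint_if_card_below_eq:
  fixes B :: "real set"
  assumes "finite B" "z \<le> z'" "card {b\<in>B. b < z} = card {b\<in>B. b < z'}"
  shows "{z..<z'} \<inter> B = {}"
proof -
  have eq: "{b\<in>B. b < z} = {b\<in>B. b < z'}"
    using assms by (intro card_subset_eq) auto
  show ?thesis
  proof (rule ccontr)
    assume "{z..<z'} \<inter> B \<noteq> {}"
    then obtain b where "b \<in> B" "z \<le> b" "b < z'"
      by auto
    then have "b \<in> {b\<in>B. b < z'}" "b \<notin> {b\<in>B. b < z}"
      by auto
    with eq show False
      by simp
  qed
qed

lemma affine_pieces_eq_if_same_gap:
  assumes breaks: "pl_breaks f B"
    and piece: "lo < z" "z < hi" "{lo<..<hi} \<inter> B = {}" "\<forall>w\<in>{lo..hi}. f w = c * w + d"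
    and piece': "lo' < z'" "z' < hi'" "{lo'<..<hi'} \<inter> B = {}" "\<forall>w\<in>{lo'..hi'}. f w = c' * w + d'"
    and between: "z \<le> z'" "{z..<z'} \<inter> B = {}"
  shows "(c, d) = (c', d')"
proof -
  have "b \<notin> {lo<..<hi'}" if "b \<in> B" for b
  proof (cases "b < z")
    case True
    have "b \<notin> {lo<..<hi}"
      using piece that by blast
    with True piece show ?thesis
      by auto
  next
    case False
    have "b \<notin> {z..<z'}"
      using between that by blast
    with False have "z' \<le> b"
      by auto
    moreover have "b \<notin> {lo'<..<hi'}"
      using piece' that by blast
    ultimately show ?thesis
      using piece' by auto
  qed
  then have "{lo<..<hi'} \<inter> B = {}"
    by blast
  moreover have "lo < hi'"
    using piece piece' between by linarith
  ultimately obtain c'' d'' where gap: "\<forall>w\<in>{lo..hi'}. f w = c'' * w + d''"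
    using breaks unfolding pl_breaks_def by blast
  have "(c, d) = (c'', d'')"
    by (rule affine_coeffs_unique[OF _ piece(4) gap]) (use piece piece' between in auto)
  moreover have "(c', d') = (c'', d'')"
    by (rule affine_coeffs_unique[OF _ piece'(4) gap]) (use piece piece' between in auto)
  ultimately show ?thesis
    by simp
qed

lemma card_affine_pieces_le:
  assumes "pl_breaks f B"
  shows "finite (affine_pieces f) \<and> card (affine_pieces f) \<le> card B + 1"
proof -
  have fin: "finite B"
    using assms by (simp add: pl_breaks_def)
  have "\<exists>z p q. p < z \<and> z < q \<and> {p<..<q} \<inter> B = {} \<and> (\<forall>w\<in>{p..q}. f w = fst g * w + snd g)"
    if "g \<in> affine_pieces f" for g
    using affine_piece_in_gap[OF fin that] .
  then obtain z lo hi where piece: "\<And>g. g \<in> affine_pieces f \<Longrightarrow> lo g < z g \<and> z g < hi g \<and>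
      {lo g<..<hi g} \<inter> B = {} \<and> (\<forall>w\<in>{lo g..hi g}. f w = fst g * w + snd g)"
    by metis
  define idx where "idx g = card {b\<in>B. b < z g}" for g
  have same_idx: "g = g'"
    if g: "g \<in> affine_pieces f" and g': "g' \<in> affine_pieces f" and "idx g = idx g'" and "z g \<le> z g'"
    for g g'
  proof -
    have "{z g..<z g'} \<inter> B = {}"
      using Ico_disjoint_if_card_below_eq[OF fin \<open>z g \<le> z g'\<close>] \<open>idx g = idx g'\<close>
      unfolding idx_def .
    with piece[OF g] piece[OF g'] \<open>z g \<le> z g'\<close> have "(fst g, snd g) = (fst g', snd g')"
      by (intro affine_pieces_eq_if_same_gap[OF assms]) auto
    then show ?thesis
      by (simp add: prod_eq_iff)
  qed
  have inj: "inj_on idx (affine_pieces f)"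
    by (rule inj_onI) (metis same_idx linear)
  have idx_range: "idx ` affine_pieces f \<subseteq> {..card B}"
    using fin by (auto simp: idx_def intro!: card_mono)
  show ?thesis
    using inj_on_finite[OF inj idx_range] card_inj_on_le[OF inj idx_range] by simp
qed

lemma card_affine_pieces_le_bound:
  "pl_bound f K \<Longrightarrow> finite (affine_pieces f) \<and> card (affine_pieces f) \<le> K + 1"
  unfolding pl_bound_def using card_affine_pieces_le by fastforce

lemma pl_bound_affine_comp:
  assumes "pl_bound f K"
  shows "pl_bound (\<lambda>x. a * f x + b) K"
proof -
  have "pl_breaks (\<lambda>x. a * f x + b) B" if "pl_breaks f B" for B
  proof -
    have "\<exists>c d. \<forall>z\<in>{x..y}. a * f z + b = c * z + d" if "\<exists>c d. \<forall>z\<in>{x..y}. f z = c * z + d" for x y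
    proof -
      from that obtain c d where "\<forall>z\<in>{x..y}. f z = c * z + d" by blast
      then have "\<forall>z\<in>{x..y}. a * f z + b = (a * c) * z + (a * d + b)"
        by (simp add: algebra_simps)
      then show ?thesis by blast
    qed
    with that show ?thesis
      by (simp add: pl_breaks_def)
  qed
  with assms show ?thesis
    unfolding pl_bound_def by blast
qed

lemma pl_bound_reflect:
  assumes "pl_bound f K"
  shows "pl_bound (\<lambda>x. f (- x)) K"
proof -
  obtain B where B: "pl_breaks f B" "card B \<le> K"
    using assms by (auto simp: pl_bound_def)
  have "\<exists>c d. \<forall>z\<in>{x..y}. f (- z) = c * z + d" if "x < y" "{x<..<y} \<inter> uminus ` B = {}" for x y
  proof -
    have "b \<notin> {- y<..<- x}" if "b \<in> B" for b
      using that \<open>{x<..<y} \<inter> uminus ` B = {}\<close> by force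
    then have "{- y<..<- x} \<inter> B = {}"
      by blast
    moreover have "- y < - x"
      using \<open>x < y\<close> by simp
    ultimately obtain c d where "\<forall>z\<in>{- y..- x}. f z = c * z + d"
      using B(1) unfolding pl_breaks_def by blast
    then have "\<forall>z\<in>{x..y}. f (- z) = (- c) * z + d"
      by auto
    then show ?thesis by blast
  qed
  then have "pl_breaks (\<lambda>x. f (- x)) (uminus ` B)"
    using B(1) by (simp add: pl_breaks_def)
  moreover have "card (uminus ` B) \<le> K"
    using B(2) card_image_le[of B uminus] B(1) by (simp add: pl_breaks_def)
  ultimately show ?thesis
    by (rule pl_boundI)
qed

section \<open>Composition\<close>

definition nonflat_level_set :: "(real \<Rightarrow> real) \<Rightarrow> real \<Rightarrow> real set" where
  "nonflat_level_set f v = {x. f x = v \<and> \<not> (\<forall>\<^sub>F z in nhds x. f z = v)}"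

lemma finite_card_le_2_if_no_three:
  fixes A :: "'a::linorder set"
  assumes "\<And>x y z. x \<in> A \<Longrightarrow> y \<in> A \<Longrightarrow> z \<in> A \<Longrightarrow> x < y \<Longrightarrow> y < z \<Longrightarrow> False"
  shows "finite A \<and> card A \<le> 2"
proof (rule ccontr)
  assume "\<not> (finite A \<and> card A \<le> 2)"
  then obtain T where "T \<subseteq> A" "card T = 3"
    by (metis infinite_arbitrarily_large not_less_eq_eq numeral_2_eq_2 numeral_3_eq_3
        obtain_subset_with_card_n)
  then obtain x y z where "x \<in> A" "y \<in> A" "z \<in> A" "x \<noteq> y" "y \<noteq> z" "x \<noteq> z"
    by (auto simp: card_3_iff)
  then show False
    using assms[of x y z] assms[of x z y] assms[of y x z] assms[of y z x] assms[of z x y] assms[of z y x]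
    by (metis linorder_neqE)
qed

lemma concave_on_chord_le:
  fixes f :: "real \<Rightarrow> real"
  assumes "concave_on UNIV f" "x < y" "y < z"
  shows "(z - y) * f x + (y - x) * f z \<le> (z - x) * f y"
proof -
  define t where "t = (y - x) / (z - x)"
  have t: "t * (z - x) = y - x"
    using assms by (simp add: t_def)
  have "t \<ge> 0" "t \<le> 1"
    using assms by (auto simp: t_def field_simps)
  moreover have "(1 - t) *\<^sub>R x + t *\<^sub>R z = y"
    using t by (simp add: algebra_simps)
  ultimately have "(1 - t) * f x + t * f z \<le> f y"
    using concave_onD[OF assms(1), of t x z] by simp
  then have "(z - x) * ((1 - t) * f x + t * f z) \<le> (z - x) * f y"
    using assms by (intro mult_left_mono) auto
  moreover have "(z - x) * ((1 - t) * f x + t * f z) = (z - x) * f x - t * (z - x) * f x + t * (z - x) * f z"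
    by (simp add: algebra_simps)
  ultimately show ?thesis
    by (simp only: t) (simp add: algebra_simps)
qed

lemma nonflat_level_set_concave:
  assumes "concave_on UNIV f"
  shows "finite (nonflat_level_set f v) \<and> card (nonflat_level_set f v) \<le> 2"
proof (rule finite_card_le_2_if_no_three)
  note chord = concave_on_chord_le[OF assms]
  fix x1 x2 x3
  assume x: "x1 \<in> nonflat_level_set f v" "x2 \<in> nonflat_level_set f v" "x3 \<in> nonflat_level_set f v"
    and "x1 < x2" "x2 < x3"
  have fx: "f x1 = v" "f x2 = v" "f x3 = v"
    using x by (auto simp: nonflat_level_set_def)
  have "f z = v" if "x1 < z" "z < x3" for z
  proof -
    have "(x3 - x1) * v \<le> (x3 - x1) * f z"
      using chord[of x1 z x3] that fx by (simp add: algebra_simps)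
    then have "v \<le> f z"
      using \<open>x1 < x2\<close> \<open>x2 < x3\<close> by simp
    moreover have "f z \<le> v"
    proof (cases z x2 rule: linorder_cases)
      case less
      then have "(x3 - x2) * f z \<le> (x3 - x2) * v"
        using chord[of z x2 x3] \<open>x2 < x3\<close> fx by (simp add: algebra_simps)
      then show ?thesis
        using \<open>x2 < x3\<close> by simp
    next
      case greater
      then have "(x2 - x1) * f z \<le> (x2 - x1) * v"
        using chord[of x1 x2 z] \<open>x1 < x2\<close> fx by (simp add: algebra_simps)
      then show ?thesis
        using \<open>x1 < x2\<close> by simp
    qed (use fx in simp)
    ultimately show ?thesis
      by simp
  qed
  moreover have "\<forall>\<^sub>F z in nhds x2. z \<in> {x1<..<x3}"
    using \<open>x1 < x2\<close> \<open>x2 < x3\<close> by (intro eventually_nhds_in_open) auto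
  ultimately have "\<forall>\<^sub>F z in nhds x2. f z = v"
    by (auto elim: eventually_mono)
  with x(2) show False
    by (simp add: nonflat_level_set_def)
qed

lemma nonflat_level_set_convex:
  assumes "convex_on UNIV f"
  shows "finite (nonflat_level_set f v) \<and> card (nonflat_level_set f v) \<le> 2"
proof -
  have "nonflat_level_set (\<lambda>x. - f x) (- v) = nonflat_level_set f v"
    by (simp add: nonflat_level_set_def)
  moreover have "concave_on UNIV (\<lambda>x. - f x)"
    using assms by (simp add: convex_on_iff_concave)
  ultimately show ?thesis
    by (metis nonflat_level_set_concave)
qed

lemma nonflat_level_set_affine_comp:
  assumes "\<And>v. finite (nonflat_level_set f v) \<and> card (nonflat_level_set f v) \<le> m"
  shows "finite (nonflat_level_set (\<lambda>x. a * f x + b) v) \<and> card (nonflat_level_set (\<lambda>x. a * f x + b) v) \<le> m"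
proof (cases "a = 0")
  case True
  then show ?thesis
    by (simp add: nonflat_level_set_def)
next
  case False
  then have "nonflat_level_set (\<lambda>x. a * f x + b) v = nonflat_level_set f ((v - b) / a)"
    by (simp add: nonflat_level_set_def field_simps)
  then show ?thesis
    using assms by simp
qed

lemma nonflat_level_set_if_affine:
  fixes h :: "real \<Rightarrow> real"
  assumes "\<alpha> \<noteq> 0" and z: "z \<in> {x<..<y}" and h: "\<forall>w\<in>{x..y}. h w = \<alpha> * w + \<beta>"
  shows "z \<in> nonflat_level_set h (h z)"
proof -
  have "\<not> (\<forall>\<^sub>F w in nhds z. h w = h z)"
  proof
    assume "\<forall>\<^sub>F w in nhds z. h w = h z"
    moreover have "\<forall>\<^sub>F w in nhds z. w \<in> {x<..<y}"
      using z by (intro eventually_nhds_in_open) auto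
    ultimately have "\<forall>\<^sub>F w in nhds z. w = z"
      by eventually_elim (use h z \<open>\<alpha> \<noteq> 0\<close> in auto)
    then have "\<forall>\<^sub>F w in at z. False"
      by (auto simp: eventually_at_filter elim: eventually_mono)
    then show False
      by (simp add: trivial_limit_at)
  qed
  then show ?thesis
    by (simp add: nonflat_level_set_def)
qed

lemma affine_comp_on_gap:
  fixes g h :: "real \<Rightarrow> real"
  assumes g: "pl_breaks g Bg" and "x < y" "\<alpha> \<noteq> 0"
    and h_xy: "\<forall>z\<in>{x..y}. h z = \<alpha> * z + \<beta>" and avoid: "\<And>z. z \<in> {x<..<y} \<Longrightarrow> h z \<notin> Bg"
  shows "\<exists>c d. \<forall>z\<in>{x..y}. g (h z) = c * z + d"
proof -
  define lo hi where "lo = min (h x) (h y)" and "hi = max (h x) (h y)"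
  have "h ` {x..y} = (\<lambda>z. \<alpha> * z + \<beta>) ` {x..y}"
    using h_xy by (auto intro: image_cong)
  also have "\<dots> = {lo..hi}"
    using \<open>x < y\<close> h_xy mult_left_mono[of x y \<alpha>] mult_left_mono_neg[of x y \<alpha>]
    by (auto simp: image_affinity_atLeastAtMost lo_def hi_def)
  finally have image: "h ` {x..y} = {lo..hi}" .
  have "h x \<noteq> h y"
    using h_xy \<open>x < y\<close> \<open>\<alpha> \<noteq> 0\<close> by auto
  then have "lo < hi"
    by (auto simp: lo_def hi_def)
  have "u \<notin> Bg" if u: "lo < u" "u < hi" for u
  proof -
    obtain z where z: "z \<in> {x..y}" "h z = u"
      using image u by (metis atLeastAtMost_iff imageE less_eq_real_def)
    moreover have "z \<noteq> x" "z \<noteq> y"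
      using u z by (auto simp: lo_def hi_def)
    ultimately show ?thesis
      using avoid[of z] by auto
  qed
  then have "{lo<..<hi} \<inter> Bg = {}"
    by auto
  then obtain \<gamma> \<delta> where g_lohi: "\<forall>u\<in>{lo..hi}. g u = \<gamma> * u + \<delta>"
    using g \<open>lo < hi\<close> unfolding pl_breaks_def by blast
  have "g (h z) = (\<gamma> * \<alpha>) * z + (\<gamma> * \<beta> + \<delta>)" if "z \<in> {x..y}" for z
  proof -
    have "h z \<in> {lo..hi}"
      using image that by blast
    with g_lohi h_xy that show ?thesis
      by (simp add: algebra_simps)
  qed
  then show ?thesis
    by blast
qed

lemma pl_breaks_comp:
  assumes g: "pl_breaks g Bg" and h: "pl_breaks h Bh"
    and levels: "\<And>v. finite (nonflat_level_set h v)"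
  shows "pl_breaks (\<lambda>x. g (h x)) (Bh \<union> (\<Union>v\<in>Bg. nonflat_level_set h v))"
proof -
  have "\<exists>c d. \<forall>z\<in>{x..y}. g (h z) = c * z + d"
    if "x < y" and gap: "{x<..<y} \<inter> (Bh \<union> (\<Union>v\<in>Bg. nonflat_level_set h v)) = {}" for x y
  proof -
    have "{x<..<y} \<inter> Bh = {}"
      using gap by blast
    then obtain \<alpha> \<beta> where h_xy: "\<forall>z\<in>{x..y}. h z = \<alpha> * z + \<beta>"
      using h \<open>x < y\<close> unfolding pl_breaks_def by blast
    show ?thesis
    proof (cases "\<alpha> = 0")
      case True
      then have "\<forall>z\<in>{x..y}. g (h z) = 0 * z + g \<beta>"
        using h_xy by simp
      then show ?thesis
        by blast
    next
      case False
      have "h z \<notin> Bg" if "z \<in> {x<..<y}" for z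
        using nonflat_level_set_if_affine[OF False that h_xy] that gap by blast
      then show ?thesis
        by (rule affine_comp_on_gap[OF g \<open>x < y\<close> False h_xy])
    qed
  qed
  moreover have "finite (Bh \<union> (\<Union>v\<in>Bg. nonflat_level_set h v))"
    using g h levels by (simp add: pl_breaks_def)
  ultimately show ?thesis
    by (simp add: pl_breaks_def)
qed

lemma pl_bound_comp:
  assumes "pl_bound g K" and "pl_bound h L"
    and levels: "\<And>v. finite (nonflat_level_set h v) \<and> card (nonflat_level_set h v) \<le> m"
  shows "pl_bound (\<lambda>x. g (h x)) (L + m * K)"
proof -
  obtain Bg Bh where Bg: "pl_breaks g Bg" "card Bg \<le> K" and Bh: "pl_breaks h Bh" "card Bh \<le> L"
    using assms by (auto simp: pl_bound_def)
  have "card (\<Union>v\<in>Bg. nonflat_level_set h v) \<le> (\<Sum>v\<in>Bg. card (nonflat_level_set h v))"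
    by (rule card_UN_le) (use Bg in \<open>simp add: pl_breaks_def\<close>)
  also have "\<dots> \<le> m * card Bg"
    using sum_mono[of Bg "\<lambda>v. card (nonflat_level_set h v)" "\<lambda>_. m"] levels by (simp add: mult.commute)
  also have "\<dots> \<le> m * K"
    using Bg(2) by simp
  finally have "card (Bh \<union> (\<Union>v\<in>Bg. nonflat_level_set h v)) \<le> L + m * K"
    using card_Un_le[of Bh "\<Union>v\<in>Bg. nonflat_level_set h v"] Bh(2) by linarith
  then show ?thesis
    using pl_breaks_comp[OF Bg(1) Bh(1)] levels by (blast intro: pl_boundI)
qed

section \<open>Lower envelopes of affine functions\<close>

definition lower_env :: "(real \<times> real) set \<Rightarrow> real \<Rightarrow> real" where
  "lower_env S x = Min ((\<lambda>(c, d). c * x + d) ` S)"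

lemma lower_env_le: "finite S \<Longrightarrow> (c, d) \<in> S \<Longrightarrow> lower_env S x \<le> c * x + d"
  unfolding lower_env_def by (rule Min_le) force+

lemma lower_env_greatest:
  "finite S \<Longrightarrow> S \<noteq> {} \<Longrightarrow> (\<And>c d. (c, d) \<in> S \<Longrightarrow> y \<le> c * x + d) \<Longrightarrow> y \<le> lower_env S x"
  unfolding lower_env_def by (subst Min_ge_iff) auto

lemma lower_env_insert:
  "finite S \<Longrightarrow> S \<noteq> {} \<Longrightarrow> lower_env (insert (c, d) S) x = min (c * x + d) (lower_env S x)"
  unfolding lower_env_def by (simp add: Min_insert)

lemma concave_lower_env:
  assumes "finite S" "S \<noteq> {}"
  shows "concave_on UNIV (lower_env S)"
  unfolding concave_on_iff
proof (intro conjI ballI allI impI)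
  fix x y u v :: real
  assume "u \<ge> 0" "v \<ge> 0" "u + v = 1"
  show "u * lower_env S x + v * lower_env S y \<le> lower_env S (u *\<^sub>R x + v *\<^sub>R y)"
  proof (rule lower_env_greatest[OF assms])
    fix c d
    assume "(c, d) \<in> S"
    then have "u * lower_env S x \<le> u * (c * x + d)" "v * lower_env S y \<le> v * (c * y + d)"
      using \<open>u \<ge> 0\<close> \<open>v \<ge> 0\<close> lower_env_le[OF assms(1)] by (auto intro: mult_left_mono)
    moreover have "d = u * d + v * d"
      using \<open>u + v = 1\<close> by (metis distrib_right mult_1)
    ultimately show "u * lower_env S x + v * lower_env S y \<le> c * (u *\<^sub>R x + v *\<^sub>R y) + d"
      by (simp add: algebra_simps)
  qed
qed simp

lemma continuous_lower_env:
  assumes "finite S" "S \<noteq> {}"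
  shows "continuous_on UNIV (lower_env S)"
proof -
  have "continuous_on UNIV (\<lambda>x. - lower_env S x)"
    using concave_lower_env[OF assms] by (intro convex_on_continuous) (auto simp: concave_on_def)
  then show ?thesis
    using continuous_on_minus by fastforce
qed

lemma affine_sign_right:
  fixes \<alpha> \<beta> :: real
  obtains \<delta> where "\<delta> > 0" "(\<forall>t\<in>{0..\<delta>}. 0 \<le> \<alpha> * t + \<beta>) \<or> (\<forall>t\<in>{0..\<delta>}. \<alpha> * t + \<beta> \<le> 0)"
proof -
  have nonneg: "\<exists>\<delta>>0. \<forall>t\<in>{0..\<delta>}. 0 \<le> \<alpha>' * t + \<beta>'"
    if "\<beta>' > 0 \<or> (\<beta>' = 0 \<and> \<alpha>' \<ge> 0)" for \<alpha>' \<beta>' :: real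
  proof (cases "\<alpha>' \<ge> 0")
    case True
    have "0 \<le> \<alpha>' * t + \<beta>'" if "t \<in> {0..1}" for t
      using True \<open>\<beta>' > 0 \<or> (\<beta>' = 0 \<and> \<alpha>' \<ge> 0)\<close> that by (auto intro: add_nonneg_nonneg)
    then show ?thesis
      by (intro exI[of _ 1]) auto
  next
    case False
    with that have "\<beta>' > 0" "\<alpha>' < 0"
      by auto
    have "0 \<le> \<alpha>' * t + \<beta>'" if "t \<in> {0..- \<beta>' / \<alpha>'}" for t
    proof -
      have "\<alpha>' * (- \<beta>' / \<alpha>') \<le> \<alpha>' * t"
        using that \<open>\<alpha>' < 0\<close> by (intro mult_left_mono_neg) auto
      with \<open>\<alpha>' < 0\<close> show ?thesis
        by simp
    qed
    moreover have "- \<beta>' / \<alpha>' > 0"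
      using \<open>\<beta>' > 0\<close> \<open>\<alpha>' < 0\<close> by (simp add: divide_pos_neg)
    ultimately show ?thesis
      by blast
  qed
  show thesis
  proof (cases "\<beta> > 0 \<or> (\<beta> = 0 \<and> \<alpha> \<ge> 0)")
    case True
    then show thesis
      using nonneg[of \<beta> \<alpha>] that by blast
  next
    case False
    then have "- \<beta> > 0 \<or> (- \<beta> = 0 \<and> - \<alpha> \<ge> 0)"
      by auto
    then obtain \<delta> where "\<delta> > 0" and neg: "\<forall>t\<in>{0..\<delta>}. 0 \<le> (- \<alpha>) * t + (- \<beta>)"
      using nonneg by blast
    have "\<alpha> * t + \<beta> \<le> 0" if "t \<in> {0..\<delta>}" for t
      using neg that by fastforce
    with \<open>\<delta> > 0\<close> show thesis
      using that by blast
  qed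
qed

lemma affine_order_right:
  fixes c d c' d' x :: real
  obtains \<delta> where "\<delta> > 0"
    "(\<forall>z\<in>{x..x + \<delta>}. c * z + d \<le> c' * z + d') \<or> (\<forall>z\<in>{x..x + \<delta>}. c' * z + d' \<le> c * z + d)"
proof -
  define \<beta> where "\<beta> = (c' * x + d') - (c * x + d)"
  have diff: "(c' * z + d') - (c * z + d) = (c' - c) * (z - x) + \<beta>" for z
    by (simp add: \<beta>_def algebra_simps)
  obtain \<delta> where "\<delta> > 0"
    and sign: "(\<forall>t\<in>{0..\<delta>}. 0 \<le> (c' - c) * t + \<beta>) \<or> (\<forall>t\<in>{0..\<delta>}. (c' - c) * t + \<beta> \<le> 0)"
    by (rule affine_sign_right)
  have shift: "z - x \<in> {0..\<delta>}" if "z \<in> {x..x + \<delta>}" for z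
    using that by auto
  from sign have "(\<forall>z\<in>{x..x + \<delta>}. c * z + d \<le> c' * z + d') \<or> (\<forall>z\<in>{x..x + \<delta>}. c' * z + d' \<le> c * z + d)"
    using diff shift by (smt (verit, best))
  with \<open>\<delta> > 0\<close> show thesis
    by (rule that)
qed

lemma lower_env_right_piece:
  assumes "finite S" "S \<noteq> {}"
  shows "\<exists>\<delta>>0. \<exists>c d. (c, d) \<in> S \<and> (\<forall>z\<in>{x..x + \<delta>}. lower_env S z = c * z + d)"
  using assms
proof (induction S rule: finite_ne_induct)
  case (singleton g)
  then show ?case
    by (cases g) (auto simp: lower_env_def intro!: exI[of _ 1])
next
  case (insert g S)
  obtain c' d' where g: "g = (c', d')"
    by (cases g)
  obtain \<delta> c d where "\<delta> > 0" "(c, d) \<in> S" and S_piece: "\<forall>z\<in>{x..x + \<delta>}. lower_env S z = c * z + d"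
    using insert.IH by blast
  obtain \<delta>' where "\<delta>' > 0" and order:
      "(\<forall>z\<in>{x..x + \<delta>'}. c * z + d \<le> c' * z + d') \<or> (\<forall>z\<in>{x..x + \<delta>'}. c' * z + d' \<le> c * z + d)"
    by (rule affine_order_right)
  have env: "lower_env (insert g S) z = min (c' * z + d') (c * z + d)" if "z \<in> {x..x + min \<delta> \<delta>'}" for z
  proof -
    have "z \<in> {x..x + \<delta>}"
      using that min.cobounded1[of \<delta> \<delta>'] by auto
    then show ?thesis
      using S_piece insert.hyps by (simp add: g lower_env_insert)
  qed
  from order show ?case
  proof
    assume "\<forall>z\<in>{x..x + \<delta>'}. c * z + d \<le> c' * z + d'"
    then have "\<forall>z\<in>{x..x + min \<delta> \<delta>'}. lower_env (insert g S) z = c * z + d"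
      using env by auto
    then show ?case
      using \<open>\<delta> > 0\<close> \<open>\<delta>' > 0\<close> \<open>(c, d) \<in> S\<close> by (intro exI[of _ "min \<delta> \<delta>'"]) auto
  next
    assume "\<forall>z\<in>{x..x + \<delta>'}. c' * z + d' \<le> c * z + d"
    then have "\<forall>z\<in>{x..x + min \<delta> \<delta>'}. lower_env (insert g S) z = c' * z + d'"
      using env by auto
    then show ?case
      using \<open>\<delta> > 0\<close> \<open>\<delta>' > 0\<close> by (intro exI[of _ "min \<delta> \<delta>'"]) (auto simp: g)
  qed
qed

lemma affine_pieces_lower_env:
  assumes "finite S" "S \<noteq> {}"
  shows "affine_pieces (lower_env S) \<subseteq> S"
proof
  fix g
  assume "g \<in> affine_pieces (lower_env S)"
  then obtain c d p q where g: "g = (c, d)" "p < q" and pq: "\<forall>z\<in>{p..q}. lower_env S z = c * z + d"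
    unfolding affine_pieces_def by auto
  obtain \<delta> c' d' where "\<delta> > 0" "(c', d') \<in> S" and right: "\<forall>z\<in>{p..p + \<delta>}. lower_env S z = c' * z + d'"
    using lower_env_right_piece[OF assms] by blast
  have "(c, d) = (c', d')"
    by (rule affine_coeffs_unique[OF _ pq right]) (use \<open>p < q\<close> \<open>\<delta> > 0\<close> in auto)
  with g \<open>(c', d') \<in> S\<close> show "g \<in> S"
    by simp
qed

lemma is_interval_lower_env_contact:
  assumes "finite S" "(c, d) \<in> S"
  shows "is_interval {z. lower_env S z = c * z + d}"
proof -
  have "lower_env S z = c * z + d \<longleftrightarrow> (\<forall>(c', d')\<in>S. (c - c') * z \<le> d' - d)" for z
  proof
    assume eq: "lower_env S z = c * z + d"
    show "\<forall>(c', d')\<in>S. (c - c') * z \<le> d' - d"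
    proof (clarify)
      fix c' d'
      assume "(c', d') \<in> S"
      then have "c * z + d \<le> c' * z + d'"
        using eq lower_env_le[OF assms(1)] by metis
      then show "(c - c') * z \<le> d' - d"
        by (simp add: algebra_simps)
    qed
  next
    assume below: "\<forall>(c', d')\<in>S. (c - c') * z \<le> d' - d"
    have "c * z + d \<le> lower_env S z"
    proof (rule lower_env_greatest)
      fix c' d'
      assume "(c', d') \<in> S"
      with below show "c * z + d \<le> c' * z + d'"
        by (auto simp: algebra_simps)
    qed (use assms in auto)
    then show "lower_env S z = c * z + d"
      using lower_env_le[OF assms] by (intro antisym)
  qed
  then have "{z. lower_env S z = c * z + d} = (\<Inter>g\<in>S. {z. (c - fst g) * z \<le> snd g - d})"
    by (auto simp: case_prod_beta)
  moreover have "convex {z :: real. (c - fst g) * z \<le> snd g - d}" for g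
    using convex_halfspace_le[of "c - fst g" "snd g - d"] by (simp add: inner_real_def)
  ultimately show ?thesis
    by (simp add: is_interval_convex_1 convex_INT)
qed

definition kinks :: "(real \<Rightarrow> real) \<Rightarrow> real set" where
  "kinks f = {x. \<not> (\<exists>\<epsilon>>0. \<exists>c d. \<forall>z\<in>{x - \<epsilon>..x + \<epsilon>}. f z = c * z + d)}"

lemma interval_subset_of_ends:
  fixes J :: "real set"
  shows "is_interval J \<Longrightarrow> a \<in> J \<Longrightarrow> b \<in> J \<Longrightarrow> {a..b} \<subseteq> J"
  unfolding is_interval_1 by (meson atLeastAtMost_iff subsetI)

lemma not_kink_if_same_piece:
  assumes "finite S" "(c, d) \<in> S" "x < x'" "lower_env S x = c * x + d" "\<delta> > 0"
    and right: "\<forall>z\<in>{x'..x' + \<delta>}. lower_env S z = c * z + d"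
  shows "x' \<notin> kinks (lower_env S)"
proof -
  define \<epsilon> where "\<epsilon> = min (x' - x) \<delta>"
  have "\<epsilon> > 0" "\<epsilon> \<le> x' - x" "\<epsilon> \<le> \<delta>"
    using \<open>x < x'\<close> \<open>\<delta> > 0\<close> by (simp_all add: \<epsilon>_def)
  let ?J = "{z. lower_env S z = c * z + d}"
  have "x \<in> ?J" "x' + \<delta> \<in> ?J"
    using assms by auto
  with is_interval_lower_env_contact[OF assms(1,2)] have "{x..x' + \<delta>} \<subseteq> ?J"
    by (rule interval_subset_of_ends)
  moreover have "{x' - \<epsilon>..x' + \<epsilon>} \<subseteq> {x..x' + \<delta>}"
    using \<open>\<epsilon> \<le> x' - x\<close> \<open>\<epsilon> \<le> \<delta>\<close> by auto
  ultimately have "\<forall>z\<in>{x' - \<epsilon>..x' + \<epsilon>}. lower_env S z = c * z + d"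
    by blast
  with \<open>\<epsilon> > 0\<close> show ?thesis
    unfolding kinks_def by blast
qed

lemma card_kinks_lower_env:
  assumes "finite S" "S \<noteq> {}"
  shows "finite (kinks (lower_env S)) \<and> card (kinks (lower_env S)) \<le> card (affine_pieces (lower_env S))"
proof -
  let ?F = "lower_env S"
  have "\<forall>x. \<exists>g. \<exists>\<delta>>0. g \<in> S \<and> (\<forall>z\<in>{x..x + \<delta>}. ?F z = fst g * z + snd g)"
    using lower_env_right_piece[OF assms] by fastforce
  then obtain rp where rp_all: "\<forall>x. \<exists>\<delta>>0. rp x \<in> S \<and> (\<forall>z\<in>{x..x + \<delta>}. ?F z = fst (rp x) * z + snd (rp x))"
    by (rule choice[THEN exE])
  note rp = spec[OF rp_all]
  have rp_piece: "rp x \<in> affine_pieces ?F" for x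
  proof -
    obtain \<delta> where "\<delta> > 0" "\<forall>z\<in>{x..x + \<delta>}. ?F z = fst (rp x) * z + snd (rp x)"
      using rp[of x] by blast
    then show ?thesis
      using affine_pieces_intro[of x "x + \<delta>" ?F "fst (rp x)" "snd (rp x)"] by simp
  qed
  have not_kink: "x' \<notin> kinks ?F" if "x < x'" "rp x = rp x'" for x x'
  proof -
    obtain \<delta> where "\<delta> > 0" and "\<forall>z\<in>{x..x + \<delta>}. ?F z = fst (rp x) * z + snd (rp x)"
      using rp[of x] by blast
    then have "?F x = fst (rp x) * x + snd (rp x)"
      by simp
    moreover obtain \<delta>' where "\<delta>' > 0" "\<forall>z\<in>{x'..x' + \<delta>'}. ?F z = fst (rp x) * z + snd (rp x)"
      using rp[of x'] unfolding \<open>rp x = rp x'\<close> by blast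
    moreover have "(fst (rp x), snd (rp x)) \<in> S"
      using rp[of x] by auto
    ultimately show ?thesis
      using not_kink_if_same_piece[OF assms(1) _ \<open>x < x'\<close>] by blast
  qed
  have inj: "inj_on rp (kinks ?F)"
  proof (rule inj_onI)
    fix x x'
    assume "x \<in> kinks ?F" "x' \<in> kinks ?F" "rp x = rp x'"
    then show "x = x'"
      using not_kink[of x x'] not_kink[of x' x] by (cases x x' rule: linorder_cases) auto
  qed
  have sub: "rp ` kinks ?F \<subseteq> affine_pieces ?F"
    using rp_piece by blast
  have fin: "finite (affine_pieces ?F)"
    using affine_pieces_lower_env[OF assms] assms(1) finite_subset by blast
  show ?thesis
    using inj_on_finite[OF inj sub fin] card_inj_on_le[OF inj sub fin] by simp
qed

lemma affine_extends_past_non_kink: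
  assumes "x < m" and left: "\<forall>z\<in>{x..m}. f z = c * z + d" and "m \<notin> kinks f"
  obtains \<epsilon> where "\<epsilon> > 0" "\<forall>z\<in>{x..m + \<epsilon>}. f z = c * z + d"
proof -
  obtain \<epsilon> c' d' where "\<epsilon> > 0" and near: "\<forall>z\<in>{m - \<epsilon>..m + \<epsilon>}. f z = c' * z + d'"
    using \<open>m \<notin> kinks f\<close> unfolding kinks_def by blast
  have "(c', d') = (c, d)"
    by (rule affine_coeffs_unique[OF _ near left]) (use \<open>\<epsilon> > 0\<close> \<open>x < m\<close> in auto)
  have "f z = c * z + d" if "z \<in> {x..m + \<epsilon>}" for z
  proof (cases "z \<le> m")
    case True
    with left that show ?thesis
      by auto
  next
    case False
    with that \<open>\<epsilon> > 0\<close> have "z \<in> {m - \<epsilon>..m + \<epsilon>}"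
      by auto
    with near \<open>(c', d') = (c, d)\<close> show ?thesis
      by auto
  qed
  with \<open>\<epsilon> > 0\<close> show thesis
    using that by blast
qed

lemma closed_interval_Int_Icc:
  fixes J :: "real set"
  assumes "is_interval J" "closed J" "x \<in> J" "x \<le> y"
  obtains m where "m \<in> {x..y}" "J \<inter> {x..y} = {x..m}"
proof -
  have "compact (J \<inter> {x..y})"
    using assms(2) by (intro closed_Int_compact) auto
  moreover have "x \<in> J \<inter> {x..y}"
    using assms(3,4) by simp
  ultimately obtain m where m: "m \<in> J \<inter> {x..y}" and m_max: "\<forall>z\<in>J \<inter> {x..y}. z \<le> m"
    by (metis compact_attains_sup empty_iff)
  have "{x..m} \<subseteq> J"
    using interval_subset_of_ends[OF assms(1,3)] m by blast
  with m m_max have "J \<inter> {x..y} = {x..m}"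
    by auto
  with m show thesis
    using that by blast
qed

lemma pl_breaks_lower_env_kinks:
  assumes "finite S" "S \<noteq> {}"
  shows "pl_breaks (lower_env S) (kinks (lower_env S))"
  unfolding pl_breaks_def
proof (intro conjI allI impI)
  let ?F = "lower_env S"
  show "finite (kinks ?F)"
    using card_kinks_lower_env[OF assms] by simp
  fix x y :: real
  assume "x < y" and gap: "{x<..<y} \<inter> kinks ?F = {}"
  obtain \<delta> c d where "\<delta> > 0" "(c, d) \<in> S" and right: "\<forall>z\<in>{x..x + \<delta>}. ?F z = c * z + d"
    using lower_env_right_piece[OF assms] by blast
  define J where "J = {z. ?F z = c * z + d}"
  have "is_interval J"
    unfolding J_def by (rule is_interval_lower_env_contact[OF assms(1) \<open>(c, d) \<in> S\<close>])
  moreover have "closed J"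
    unfolding J_def using continuous_lower_env[OF assms]
    by (intro closed_Collect_eq) (auto intro!: continuous_intros)
  moreover have "x \<in> J"
    using right \<open>\<delta> > 0\<close> by (simp add: J_def)
  ultimately obtain m where m: "m \<in> {x..y}" and J_xy: "J \<inter> {x..y} = {x..m}"
    using \<open>x < y\<close> closed_interval_Int_Icc by (metis less_eq_real_def)
  have "m = y"
  proof (rule ccontr)
    assume "m \<noteq> y"
    with m have "m < y"
      by auto
    have "x + min \<delta> (y - x) \<in> J \<inter> {x..y}"
      using right \<open>\<delta> > 0\<close> \<open>x < y\<close> by (auto simp: J_def)
    with J_xy \<open>\<delta> > 0\<close> \<open>x < y\<close> have "x < m"
      by auto
    moreover have left: "\<forall>z\<in>{x..m}. ?F z = c * z + d"
      using J_xy by (auto simp: J_def)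
    moreover from \<open>x < m\<close> gap \<open>m < y\<close> have "m \<notin> kinks ?F"
      by auto
    ultimately obtain \<epsilon> where "\<epsilon> > 0" and "\<forall>z\<in>{x..m + \<epsilon>}. ?F z = c * z + d"
      by (rule affine_extends_past_non_kink)
    then have "m + min \<epsilon> (y - m) \<in> J \<inter> {x..y}"
      using \<open>m < y\<close> \<open>x < m\<close> by (auto simp: J_def)
    with J_xy \<open>\<epsilon> > 0\<close> \<open>m < y\<close> show False
      by auto
  qed
  with J_xy have "\<forall>z\<in>{x..y}. ?F z = c * z + d"
    by (auto simp: J_def)
  then show "\<exists>c d. \<forall>z\<in>{x..y}. ?F z = c * z + d"
    by blast
qed

lemma pl_bound_lower_env:
  assumes "finite S" "S \<noteq> {}"
  shows "pl_bound (lower_env S) (card (affine_pieces (lower_env S)))"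
  by (rule pl_boundI[OF pl_breaks_lower_env_kinks[OF assms]]) (use card_kinks_lower_env[OF assms] in simp)

lemma pl_partition_lower_env:
  assumes "finite S" "S \<noteq> {}"
  shows "pl_partition (lower_env S) (card (affine_pieces (lower_env S)))"
proof -
  let ?F = "lower_env S" and ?A = "affine_pieces (lower_env S)"
  have "finite ?A"
    using affine_pieces_lower_env[OF assms] assms(1) finite_subset by blast
  then obtain h where h: "bij_betw h {..<card ?A} ?A"
    using ex_bij_betw_nat_finite unfolding atLeast0LessThan by blast
  define I where "I i = {z. ?F z = fst (h i) * z + snd (h i)}" for i
  have "x \<in> (\<Union>i<card ?A. I i)" for x
  proof -
    obtain \<delta> c d where "\<delta> > 0" and right: "\<forall>z\<in>{x..x + \<delta>}. ?F z = c * z + d"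
      using lower_env_right_piece[OF assms] by blast
    then have "(c, d) \<in> ?A"
      by (intro affine_pieces_intro[of x "x + \<delta>"]) auto
    then obtain i where "i < card ?A" and "h i = (c, d)"
      using h by (metis bij_betw_iff_bijections lessThan_iff)
    moreover have "?F x = c * x + d"
      using right \<open>\<delta> > 0\<close> by auto
    ultimately have "x \<in> I i"
      by (simp add: I_def)
    with \<open>i < card ?A\<close> show ?thesis
      by blast
  qed
  moreover have "is_interval (I i)" if "i < card ?A" for i
  proof -
    have "h i \<in> S"
      using h that affine_pieces_lower_env[OF assms] by (auto simp: bij_betw_def)
    then show ?thesis
      unfolding I_def by (intro is_interval_lower_env_contact[OF assms(1)]) simp
  qed
  moreover have "\<exists>c d. \<forall>x\<in>I i. ?F x = c * x + d" for i
    unfolding I_def by blast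
  ultimately show ?thesis
    unfolding pl_partition_def by (intro exI[of _ I]) blast
qed

lemma Min_affine_family_eq_lower_env:
  assumes "\<And>j. j \<in> J \<Longrightarrow> H j z = fst (coef j) * z + snd (coef j)"
  shows "Min ((\<lambda>j. H j z) ` J) = lower_env (coef ` J) z"
proof -
  have "(\<lambda>(c, d). c * z + d) ` coef ` J = (\<lambda>j. fst (coef j) * z + snd (coef j)) ` J"
    by (simp add: image_image case_prod_beta)
  also have "\<dots> = (\<lambda>j. H j z) ` J"
    using assms by (intro image_cong) auto
  finally show ?thesis
    by (simp add: lower_env_def)
qed

lemma affine_pieces_Min_subset:
  assumes J: "finite J" "J \<noteq> {}" and breaks: "\<And>j. j \<in> J \<Longrightarrow> pl_breaks (H j) (Bs j)"
  shows "affine_pieces (\<lambda>x. Min ((\<lambda>j. H j x) ` J)) \<subseteq> (\<Union>j\<in>J. affine_pieces (H j))"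
proof
  let ?F = "\<lambda>x. Min ((\<lambda>j. H j x) ` J)"
  fix g
  assume "g \<in> affine_pieces ?F"
  then obtain c d p q where g: "g = (c, d)" "p < q" and F_pq: "\<forall>z\<in>{p..q}. ?F z = c * z + d"
    unfolding affine_pieces_def by auto
  have "finite (\<Union>j\<in>J. Bs j)"
    using J breaks by (auto simp: pl_breaks_def)
  then obtain q' where "p < q'" "q' \<le> q" and gap: "{p<..<q'} \<inter> (\<Union>j\<in>J. Bs j) = {}"
    using \<open>p < q\<close> by (rule interval_avoiding_finite)
  have "\<forall>j\<in>J. \<exists>cd. \<forall>z\<in>{p..q'}. H j z = fst cd * z + snd cd"
  proof
    fix j
    assume j: "j \<in> J"
    have "{p<..<q'} \<inter> Bs j = {}"
      using gap j by auto
    then obtain c d where "\<forall>z\<in>{p..q'}. H j z = c * z + d"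
      using breaks[OF j] \<open>p < q'\<close> unfolding pl_breaks_def by blast
    then show "\<exists>cd. \<forall>z\<in>{p..q'}. H j z = fst cd * z + snd cd"
      by (intro exI[of _ "(c, d)"]) simp
  qed
  then obtain coef where coef_all: "\<forall>j\<in>J. \<forall>z\<in>{p..q'}. H j z = fst (coef j) * z + snd (coef j)"
    by (rule bchoice[THEN exE])
  note coef = coef_all[rule_format]
  have F_env: "?F z = lower_env (coef ` J) z" if "z \<in> {p..q'}" for z
    using coef[OF _ that] by (rule Min_affine_family_eq_lower_env)
  obtain \<delta> c' d' where "\<delta> > 0" "(c', d') \<in> coef ` J"
    and right: "\<forall>z\<in>{p..p + \<delta>}. lower_env (coef ` J) z = c' * z + d'"
    using lower_env_right_piece[of "coef ` J" p] J by auto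
  then obtain j where "j \<in> J" "coef j = (c', d')"
    by auto
  define r where "r = min q' (p + \<delta>)"
  have "p < r" "{p..r} \<subseteq> {p..q'}" "{p..r} \<subseteq> {p..p + \<delta>}"
    using \<open>p < q'\<close> \<open>\<delta> > 0\<close> by (auto simp: r_def)
  then have F_pr: "\<forall>z\<in>{p..r}. ?F z = c' * z + d'" and H_pr: "\<forall>z\<in>{p..r}. H j z = c' * z + d'"
    using F_env right coef[OF \<open>j \<in> J\<close>] \<open>coef j = (c', d')\<close> by auto
  have "(c, d) = (c', d')"
    by (rule affine_coeffs_unique[OF _ F_pq F_pr]) (use \<open>p < r\<close> \<open>q' \<le> q\<close> r_def in auto)
  moreover have "(c', d') \<in> affine_pieces (H j)"
    using affine_pieces_intro[OF \<open>p < r\<close> H_pr] .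
  ultimately show "g \<in> (\<Union>j\<in>J. affine_pieces (H j))"
    using g \<open>j \<in> J\<close> by auto
qed

lemma pl_bound_lower_env_Min:
  assumes S: "finite S" "S \<noteq> {}" and J: "finite J" "J \<noteq> {}"
    and H: "\<And>j. j \<in> J \<Longrightarrow> pl_bound (H j) K"
    and env: "\<And>x. lower_env S x = Min ((\<lambda>j. H j x) ` J)"
  shows "pl_bound (lower_env S) (card J * (K + 1))"
proof -
  have "\<forall>j\<in>J. \<exists>B. pl_breaks (H j) B"
    using H unfolding pl_bound_def by blast
  then obtain Bs where Bs_all: "\<forall>j\<in>J. pl_breaks (H j) (Bs j)"
    by (rule bchoice[THEN exE])
  note Bs = Bs_all[rule_format]
  have pieces: "finite (affine_pieces (H j)) \<and> card (affine_pieces (H j)) \<le> K + 1" if "j \<in> J" for j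
    using card_affine_pieces_le_bound[OF H[OF that]] .
  have "lower_env S = (\<lambda>x. Min ((\<lambda>j. H j x) ` J))"
    using env by auto
  then have "affine_pieces (lower_env S) \<subseteq> (\<Union>j\<in>J. affine_pieces (H j))"
    using affine_pieces_Min_subset[OF J Bs] by simp
  then have "card (affine_pieces (lower_env S)) \<le> card (\<Union>j\<in>J. affine_pieces (H j))"
    by (intro card_mono) (use J pieces in auto)
  also have "\<dots> \<le> (\<Sum>j\<in>J. card (affine_pieces (H j)))"
    by (rule card_UN_le[OF J(1)])
  also have "\<dots> \<le> (\<Sum>j\<in>J. K + 1)"
    using pieces by (intro sum_mono) auto
  also have "\<dots> = card J * (K + 1)"
    by simp
  finally show ?thesis
    by (rule pl_bound_mono[OF pl_bound_lower_env[OF S]])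
qed

section \<open>Paths and their costs\<close>

definition path_coeffs :: "(nat \<Rightarrow> nat \<Rightarrow> real) \<Rightarrow> (nat \<Rightarrow> nat \<Rightarrow> real) \<Rightarrow> nat list \<Rightarrow> real \<times> real" where
  "path_coeffs a b p = foldl (\<lambda>(\<alpha>, \<beta>) (u, v). (a u v * \<alpha>, a u v * \<beta> + b u v)) (1, 0) (zip p (tl p))"

lemma foldl_affine_coeffs:
  fixes a b :: "nat \<Rightarrow> nat \<Rightarrow> real"
  shows "foldl (\<lambda>y (u, v). a u v * y + b u v) (\<alpha> * x + \<beta>) es =
     fst (foldl (\<lambda>(\<alpha>, \<beta>) (u, v). (a u v * \<alpha>, a u v * \<beta> + b u v)) (\<alpha>, \<beta>) es) * x
   + snd (foldl (\<lambda>(\<alpha>, \<beta>) (u, v). (a u v * \<alpha>, a u v * \<beta> + b u v)) (\<alpha>, \<beta>) es)"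
proof (induction es arbitrary: \<alpha> \<beta>)
  case (Cons e es)
  obtain u v where "e = (u, v)"
    by (cases e)
  then show ?case
    using Cons.IH[of "a u v * \<alpha>" "a u v * \<beta> + b u v"] by (simp add: algebra_simps)
qed simp

lemma path_cost_eq_coeffs:
  "path_cost a b p x = fst (path_coeffs a b p) * x + snd (path_coeffs a b p)"
  unfolding path_cost_def path_coeffs_def using foldl_affine_coeffs[of a b 1 x 0] by simp

lemma path_cost_uminus:
  "path_cost a (\<lambda>u v. - b u v) p (- x) = - path_cost a b p x"
proof -
  have "foldl (\<lambda>y (u, v). a u v * y + - b u v) (- y) es = - foldl (\<lambda>y (u, v). a u v * y + b u v) y es"
    for y :: real and es
  proof (induction es arbitrary: y)
    case (Cons e es)
    obtain u v where e: "e = (u, v)"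
      by (cases e)
    have "a u v * (- y) + - b u v = - (a u v * y + b u v)"
      by simp
    then show ?case
      using Cons.IH[of "a u v * y + b u v"] by (simp add: e)
  qed simp
  then show ?thesis
    unfolding path_cost_def by simp
qed

lemma zip_tl_append:
  assumes "xs \<noteq> []" "ys \<noteq> []"
  shows "zip (xs @ ys) (tl (xs @ ys)) = zip xs (tl xs) @ (last xs, hd ys) # zip ys (tl ys)"
  using assms
proof (induction xs)
  case (Cons x xs)
  then show ?case
    by (cases xs; cases ys) auto
qed simp

lemma path_cost_append:
  assumes "p \<noteq> []" "q \<noteq> []"
  shows "path_cost a b (p @ q) x = path_cost a b q (a (last p) (hd q) * path_cost a b p x + b (last p) (hd q))"
  unfolding path_cost_def zip_tl_append[OF assms] by simp

lemma st_paths_append: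
  assumes p: "p \<in> st_paths E s u" and q: "q \<in> st_paths E v t" and "(u, v) \<in> E"
  shows "p @ q \<in> st_paths E s t"
proof -
  have "((p @ q) ! i, (p @ q) ! Suc i) \<in> E" if i: "Suc i < length (p @ q)" for i
  proof (cases "Suc i < length p")
    case True
    then show ?thesis
      using p by (simp add: st_paths_def nth_append)
  next
    case False
    show ?thesis
    proof (cases "i < length p")
      case True
      with False have "Suc i = length p" "i = length p - 1"
        by simp_all
      then have "(p @ q) ! i = last p" "(p @ q) ! Suc i = hd q"
        using p q by (auto simp: st_paths_def nth_append last_conv_nth hd_conv_nth)
      then show ?thesis
        using p q \<open>(u, v) \<in> E\<close> by (simp add: st_paths_def)
    next
      case False
      then have "(p @ q) ! i = q ! (i - length p)" "(p @ q) ! Suc i = q ! Suc (i - length p)"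
        by (simp_all add: nth_append Suc_diff_le)
      moreover have "Suc (i - length p) < length q"
        using i False by simp
      ultimately show ?thesis
        using q by (simp add: st_paths_def)
    qed
  qed
  then show ?thesis
    using p q by (simp add: st_paths_def)
qed

lemma st_paths_split:
  assumes p: "p \<in> st_paths E s t" and "s \<in> D" "t \<notin> D"
  obtains p1 p2 u v where "p = p1 @ p2" "p1 \<in> st_paths E s u" "p2 \<in> st_paths E v t"
    "(u, v) \<in> E" "u \<in> D" "v \<notin> D"
proof -
  have edge: "(p ! i, p ! Suc i) \<in> E" if "Suc i < length p" for i
    using p that by (simp add: st_paths_def)
  have ne: "p \<noteq> []" and "hd p = s" "last p = t"
    using p by (simp_all add: st_paths_def)
  then have ex: "\<exists>j. j < length p \<and> p ! j \<notin> D"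
    using \<open>t \<notin> D\<close> by (intro exI[of _ "length p - 1"]) (simp add: last_conv_nth)
  define j where "j = (LEAST j. j < length p \<and> p ! j \<notin> D)"
  have j: "j < length p" "p ! j \<notin> D"
    using LeastI_ex[OF ex] by (simp_all add: j_def)
  have before: "p ! i \<in> D" if "i < j" for i
    using not_less_Least[of i "\<lambda>j. j < length p \<and> p ! j \<notin> D"] that j by (auto simp: j_def)
  have "p ! 0 \<in> D"
    using ne \<open>hd p = s\<close> \<open>s \<in> D\<close> by (simp add: hd_conv_nth)
  with j(2) have "j \<noteq> 0"
    by metis
  then obtain i where i: "j = Suc i"
    using not0_implies_Suc by blast
  have "take j p \<in> st_paths E s (p ! i)"
    using ne \<open>hd p = s\<close> j edge by (auto simp: st_paths_def i hd_conv_nth last_conv_nth)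
  moreover have "drop j p \<in> st_paths E (p ! j) t"
    using j \<open>last p = t\<close> edge by (auto simp: st_paths_def hd_drop_conv_nth)
  moreover have "(p ! i, p ! j) \<in> E" "p ! i \<in> D"
    using edge before j by (simp_all add: i)
  ultimately show thesis
    using j that[of "take j p" "drop j p" "p ! i" "p ! j"] by simp
qed

lemma st_path_rtrancl:
  assumes p: "p \<in> st_paths E s t" and "i \<le> j" "j < length p"
  shows "(p ! i, p ! j) \<in> E\<^sup>*"
  using assms(2,3)
proof (induction j)
  case (Suc j)
  show ?case
  proof (cases "i = Suc j")
    case False
    with Suc have "(p ! i, p ! j) \<in> E\<^sup>*"
      by simp
    moreover have "(p ! j, p ! Suc j) \<in> E"
      using p Suc.prems by (simp add: st_paths_def)
    ultimately show ?thesis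
      by (rule rtrancl_into_rtrancl)
  qed simp
qed simp

lemma st_path_reach:
  assumes p: "p \<in> st_paths E s t" and "x \<in> set p"
  shows "(s, x) \<in> E\<^sup>*" "(x, t) \<in> E\<^sup>*"
proof -
  obtain i where i: "i < length p" "x = p ! i"
    using \<open>x \<in> set p\<close> by (auto simp: in_set_conv_nth)
  have "s = p ! 0" "t = p ! (length p - 1)"
    using p by (auto simp: st_paths_def hd_conv_nth last_conv_nth)
  then show "(s, x) \<in> E\<^sup>*" "(x, t) \<in> E\<^sup>*"
    using st_path_rtrancl[OF p] i by simp_all
qed

lemma distinct_st_path:
  assumes p: "p \<in> st_paths E s t" and "acyclic E"
  shows "distinct p"
proof -
  have "p ! i \<noteq> p ! j" if "i < j" "j < length p" for i j
  proof -
    have "(p ! i, p ! Suc i) \<in> E"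
      using p that by (simp add: st_paths_def)
    moreover have "(p ! Suc i, p ! j) \<in> E\<^sup>*"
      using st_path_rtrancl[OF p] that by simp
    ultimately have "(p ! i, p ! j) \<in> E\<^sup>+"
      by (rule rtrancl_into_trancl2)
    with \<open>acyclic E\<close> show ?thesis
      by (auto simp: acyclic_def)
  qed
  then show ?thesis
    by (metis distinct_conv_nth linorder_neqE_nat)
qed

lemma finite_st_paths:
  assumes "finite V" "E \<subseteq> V \<times> V" "acyclic E"
  shows "finite (st_paths E s t)"
proof -
  have "set p \<subseteq> insert s V" if "p \<in> st_paths E s t" for p
  proof
    fix x
    assume "x \<in> set p"
    then have "(s, x) \<in> E\<^sup>*"
      using st_path_reach(1)[OF that] by simp
    then show "x \<in> insert s V"
      using assms(2) by (cases rule: rtranclE) auto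
  qed
  then have "st_paths E s t \<subseteq> {p. set p \<subseteq> insert s V \<and> distinct p}"
    using distinct_st_path assms(3) by blast
  then show ?thesis
    using finite_subset_distinct[of "insert s V"] assms(1) finite_subset by blast
qed

lemma set_st_path_subset_pred_closed:
  assumes "p \<in> st_paths E s t" "t \<in> D" "E\<inverse> `` D \<subseteq> D"
  shows "set p \<subseteq> D"
proof
  fix x
  assume "x \<in> set p"
  then have "(t, x) \<in> (E\<inverse>)\<^sup>*"
    using st_path_reach(2)[OF assms(1)] by (simp add: rtrancl_converse)
  then show "x \<in> D"
    using Image_closed_trancl[OF assms(3)] \<open>t \<in> D\<close> by blast
qed

lemma set_st_path_subset_succ_closed:
  assumes "p \<in> st_paths E s t" "s \<in> A" "E `` A \<subseteq> A"
  shows "set p \<subseteq> A"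
proof
  fix x
  assume "x \<in> set p"
  then have "(s, x) \<in> E\<^sup>*"
    using st_path_reach(1)[OF assms(1)] by simp
  then show "x \<in> A"
    using Image_closed_trancl[OF assms(3)] \<open>s \<in> A\<close> by blast
qed

lemma st_paths_restrict:
  assumes "\<And>p. p \<in> st_paths E s t \<Longrightarrow> set p \<subseteq> W"
  shows "st_paths (E \<inter> W \<times> W) s t = st_paths E s t"
proof
  show "st_paths E s t \<subseteq> st_paths (E \<inter> W \<times> W) s t"
  proof
    fix p
    assume p: "p \<in> st_paths E s t"
    have "p ! i \<in> W" "p ! Suc i \<in> W" if "Suc i < length p" for i
      using assms[OF p] that by (simp_all add: subset_iff)
    with p show "p \<in> st_paths (E \<inter> W \<times> W) s t"
      by (simp add: st_paths_def)
  qed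
qed (auto simp: st_paths_def)

lemma cost_G_restrict:
  assumes "\<And>p. p \<in> st_paths E s t \<Longrightarrow> set p \<subseteq> W"
  shows "cost_G a b (E \<inter> W \<times> W) s t = cost_G a b E s t"
  using st_paths_restrict[OF assms] by (simp add: cost_G_def[abs_def])

lemma pred_closed_subset_exists:
  assumes "finite V" "E \<subseteq> V \<times> V" "acyclic E" "m \<le> card V"
  obtains D where "D \<subseteq> V" "card D = m" "E\<inverse> `` D \<subseteq> D"
  using assms(4)
proof (induction m arbitrary: thesis)
  case 0
  then show ?case
    by (metis Image_empty2 card.empty empty_subsetI)
next
  case (Suc m)
  obtain D where D: "D \<subseteq> V" "card D = m" "E\<inverse> `` D \<subseteq> D"
    using Suc by (metis Suc_leD)
  have "wf E"
    using finite_acyclic_wf assms finite_subset[OF assms(2)] by blast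
  have "D \<noteq> V"
    using D Suc.prems by auto
  then obtain x0 where "x0 \<in> V - D"
    using D by blast
  then obtain z where z: "z \<in> V - D" and minimal: "\<And>y. (y, z) \<in> E \<Longrightarrow> y \<notin> V - D"
    using \<open>wf E\<close> unfolding wf_eq_minimal by metis
  have "E\<inverse> `` insert z D \<subseteq> insert z D"
    using D(3) minimal assms(2) by blast
  moreover have "card (insert z D) = Suc m"
    using D z assms(1) finite_subset by fastforce
  ultimately show ?case
    using Suc.prems(1)[of "insert z D"] D z by blast
qed

lemma concave_on_reflect:
  fixes f :: "real \<Rightarrow> real"
  assumes "concave_on UNIV f"
  shows "concave_on UNIV (\<lambda>x. f (- x))"
  unfolding concave_on_iff
proof (intro conjI ballI allI impI)
  fix x y u v :: real
  assume "u \<ge> 0" "v \<ge> 0" "u + v = 1"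
  moreover have "\<forall>x\<in>UNIV. \<forall>y\<in>UNIV. \<forall>u\<ge>0. \<forall>v\<ge>0. u + v = 1 \<longrightarrow> u * f x + v * f y \<le> f (u *\<^sub>R x + v *\<^sub>R y)"
    using assms unfolding concave_on_iff by blast
  ultimately have "u * f (- x) + v * f (- y) \<le> f (u *\<^sub>R (- x) + v *\<^sub>R (- y))"
    by blast
  then show "u * f (- x) + v * f (- y) \<le> f (- (u *\<^sub>R x + v *\<^sub>R y))"
    by (simp add: algebra_simps)
qed simp

definition cost_max :: "(nat \<Rightarrow> nat \<Rightarrow> real) \<Rightarrow> (nat \<Rightarrow> nat \<Rightarrow> real) \<Rightarrow> (nat \<times> nat) set \<Rightarrow> nat \<Rightarrow> nat \<Rightarrow> real \<Rightarrow> real" where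
  "cost_max a b E s t x = Max ((\<lambda>p. path_cost a b p x) ` st_paths E s t)"

lemma cost_G_le: "finite (st_paths E s t) \<Longrightarrow> p \<in> st_paths E s t \<Longrightarrow> cost_G a b E s t x \<le> path_cost a b p x"
  unfolding cost_G_def by (rule Min_le) auto

lemma cost_G_attained:
  assumes "finite (st_paths E s t)" "st_paths E s t \<noteq> {}"
  obtains p where "p \<in> st_paths E s t" "cost_G a b E s t x = path_cost a b p x"
proof -
  have "cost_G a b E s t x \<in> (\<lambda>p. path_cost a b p x) ` st_paths E s t"
    unfolding cost_G_def using assms by (intro Min_in) auto
  then show thesis
    using that by blast
qed

lemma cost_max_ge: "finite (st_paths E s t) \<Longrightarrow> p \<in> st_paths E s t \<Longrightarrow> path_cost a b p x \<le> cost_max a b E s t x"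
  unfolding cost_max_def by (rule Max_ge) auto

lemma cost_max_attained:
  assumes "finite (st_paths E s t)" "st_paths E s t \<noteq> {}"
  obtains p where "p \<in> st_paths E s t" "cost_max a b E s t x = path_cost a b p x"
proof -
  have "cost_max a b E s t x \<in> (\<lambda>p. path_cost a b p x) ` st_paths E s t"
    unfolding cost_max_def using assms by (intro Max_in) auto
  then show thesis
    using that by blast
qed

lemma cost_G_eq_lower_env: "cost_G a b E s t = lower_env (path_coeffs a b ` st_paths E s t)"
proof
  fix x
  have "(\<lambda>(c, d). c * x + d) ` path_coeffs a b ` st_paths E s t = (\<lambda>p. path_cost a b p x) ` st_paths E s t"
    by (simp add: image_image case_prod_beta path_cost_eq_coeffs)
  then show "cost_G a b E s t x = lower_env (path_coeffs a b ` st_paths E s t) x"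
    by (simp add: cost_G_def lower_env_def)
qed

text \<open>
  Longest paths are shortest paths for the weights -b, read at -x. This lets bounds on minimal
  costs, which is all the induction provides, control the maximal cost as well.
\<close>

lemma cost_max_eq_reflect:
  assumes "finite (st_paths E s t)" "st_paths E s t \<noteq> {}"
  shows "cost_max a b E s t x = - cost_G a (\<lambda>u v. - b u v) E s t (- x)"
  unfolding cost_max_def
proof (rule Max_eqI)
  show "finite ((\<lambda>p. path_cost a b p x) ` st_paths E s t)"
    using assms by simp
  show "y \<le> - cost_G a (\<lambda>u v. - b u v) E s t (- x)" if y_in: "y \<in> (\<lambda>p. path_cost a b p x) ` st_paths E s t" for y
  proof -
    obtain p where p: "p \<in> st_paths E s t" "y = path_cost a b p x"
      using y_in by blast
    then have "cost_G a (\<lambda>u v. - b u v) E s t (- x) \<le> path_cost a (\<lambda>u v. - b u v) p (- x)"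
      using cost_G_le[OF assms(1)] by blast
    with p show ?thesis
      by (simp add: path_cost_uminus)
  qed
  obtain p where "p \<in> st_paths E s t" "cost_G a (\<lambda>u v. - b u v) E s t (- x) = path_cost a (\<lambda>u v. - b u v) p (- x)"
    using cost_G_attained[OF assms] by blast
  then show "- cost_G a (\<lambda>u v. - b u v) E s t (- x) \<in> (\<lambda>p. path_cost a b p x) ` st_paths E s t"
    by (simp add: path_cost_uminus)
qed

lemma concave_cost_G:
  assumes "finite (st_paths E s t)" "st_paths E s t \<noteq> {}"
  shows "concave_on UNIV (cost_G a b E s t)"
  unfolding cost_G_eq_lower_env using assms by (intro concave_lower_env) auto

lemma convex_cost_max:
  assumes "finite (st_paths E s t)" "st_paths E s t \<noteq> {}"
  shows "convex_on UNIV (cost_max a b E s t)"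
proof -
  have "concave_on UNIV (\<lambda>x. cost_G a (\<lambda>u v. - b u v) E s t (- x))"
    using concave_on_reflect[OF concave_cost_G[OF assms]] .
  then show ?thesis
    by (simp add: convex_on_iff_concave cost_max_eq_reflect[OF assms])
qed

lemma pl_bound_cost_max:
  assumes "finite (st_paths E s t)" "st_paths E s t \<noteq> {}"
    and "pl_bound (cost_G a (\<lambda>u v. - b u v) E s t) K"
  shows "pl_bound (cost_max a b E s t) K"
proof -
  have "pl_bound (\<lambda>x. (- 1) * cost_G a (\<lambda>u v. - b u v) E s t (- x) + 0) K"
    by (intro pl_bound_affine_comp pl_bound_reflect assms(3))
  moreover have "cost_max a b E s t = (\<lambda>x. (- 1) * cost_G a (\<lambda>u v. - b u v) E s t (- x) + 0)"
    by (simp add: cost_max_eq_reflect[OF assms(1,2)] fun_eq_iff)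
  ultimately show ?thesis
    by simp
qed

section \<open>Splitting at a cut\<close>

definition crossing_edges :: "(nat \<times> nat) set \<Rightarrow> nat set \<Rightarrow> nat \<Rightarrow> nat \<Rightarrow> (nat \<times> nat) set" where
  "crossing_edges E D s t =
     {(u, v) \<in> E. u \<in> D \<and> v \<notin> D \<and> st_paths E s u \<noteq> {} \<and> st_paths E v t \<noteq> {}}"

lemma cost_G_le_via_edge:
  assumes fin: "\<And>u v. finite (st_paths E u v)"
    and "(u, v) \<in> E" "p \<in> st_paths E s u" "st_paths E v t \<noteq> {}"
  shows "cost_G a b E s t x \<le> cost_G a b E v t (a u v * path_cost a b p x + b u v)"
proof -
  let ?y = "a u v * path_cost a b p x + b u v"
  obtain q where q: "q \<in> st_paths E v t" "cost_G a b E v t ?y = path_cost a b q ?y"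
    using cost_G_attained[OF fin assms(4)] by blast
  have "p \<noteq> []" "last p = u" "q \<noteq> []" "hd q = v"
    using assms(3) q(1) by (simp_all add: st_paths_def)
  then have "path_cost a b q ?y = path_cost a b (p @ q) x"
    by (simp add: path_cost_append)
  moreover have "p @ q \<in> st_paths E s t"
    using st_paths_append[OF assms(3) q(1) assms(2)] .
  ultimately show ?thesis
    using q(2) cost_G_le[OF fin] by metis
qed

definition cross_cost ::
    "(nat \<Rightarrow> nat \<Rightarrow> real) \<Rightarrow> (nat \<Rightarrow> nat \<Rightarrow> real) \<Rightarrow> (nat \<times> nat) set \<Rightarrow> nat \<Rightarrow> nat \<Rightarrow>
      nat \<Rightarrow> nat \<Rightarrow> bool \<Rightarrow> real \<Rightarrow> real" where
  "cross_cost a b E s t u v \<sigma> x =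
     cost_G a b E v t (a u v * (if \<sigma> then cost_G a b E s u x else cost_max a b E s u x) + b u v)"

lemma cost_G_le_cross_cost:
  assumes fin: "\<And>u v. finite (st_paths E u v)" and "(u, v) \<in> crossing_edges E D s t"
  shows "cost_G a b E s t x \<le> cross_cost a b E s t u v \<sigma> x"
proof -
  from assms(2) have uv: "(u, v) \<in> E" "st_paths E s u \<noteq> {}" "st_paths E v t \<noteq> {}"
    by (auto simp: crossing_edges_def)
  have "\<exists>p\<in>st_paths E s u. (if \<sigma> then cost_G a b E s u x else cost_max a b E s u x) = path_cost a b p x"
  proof (cases \<sigma>)
    case True
    then show ?thesis
      using cost_G_attained[OF fin uv(2)] by metis
  next
    case False
    then show ?thesis
      using cost_max_attained[OF fin uv(2)] by metis
  qed
  then show ?thesis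
    using cost_G_le_via_edge[OF fin uv(1) _ uv(3)] by (auto simp: cross_cost_def)
qed

text \<open>
  The v-t part of an optimal path acts on the cost at u as an affine map; according to the sign
  of its slope it is minimised by the least or by the greatest cost of an s-u path.
\<close>

lemma cross_cost_le_cost_G:
  assumes fin: "\<And>u v. finite (st_paths E u v)" and "s \<in> D" "t \<notin> D" "st_paths E s t \<noteq> {}"
  obtains u v \<sigma> where "(u, v) \<in> crossing_edges E D s t" "cross_cost a b E s t u v \<sigma> x \<le> cost_G a b E s t x"
proof -
  obtain p where p: "p \<in> st_paths E s t" "cost_G a b E s t x = path_cost a b p x"
    using cost_G_attained[OF fin assms(4)] by blast
  obtain p1 p2 u v where split: "p = p1 @ p2" "p1 \<in> st_paths E s u" "p2 \<in> st_paths E v t"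
      "(u, v) \<in> E" "u \<in> D" "v \<notin> D"
    using st_paths_split[OF p(1) assms(2,3)] by blast
  then have uv: "(u, v) \<in> crossing_edges E D s t"
    by (auto simp: crossing_edges_def)
  define k where "k = fst (path_coeffs a b p2) * a u v"
  define \<sigma> where "\<sigma> = (k \<ge> 0)"
  define y where "y = (if \<sigma> then cost_G a b E s u x else cost_max a b E s u x)"
  have "k * y \<le> k * path_cost a b p1 x"
    using cost_G_le[OF fin split(2)] cost_max_ge[OF fin split(2)]
    by (cases \<sigma>) (simp_all add: y_def \<sigma>_def mult_left_mono mult_left_mono_neg)
  then have "path_cost a b p2 (a u v * y + b u v) \<le> path_cost a b p2 (a u v * path_cost a b p1 x + b u v)"
    by (simp add: path_cost_eq_coeffs[of a b p2] k_def algebra_simps)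
  also have "\<dots> = cost_G a b E s t x"
    using p split by (simp add: path_cost_append st_paths_def)
  finally have "cross_cost a b E s t u v \<sigma> x \<le> cost_G a b E s t x"
    using cost_G_le[OF fin split(3)] order_trans unfolding cross_cost_def y_def by blast
  with uv show thesis
    by (rule that)
qed

lemma cost_G_split_at_cut:
  assumes fin: "\<And>u v. finite (st_paths E u v)" and "finite E"
    and "s \<in> D" "t \<notin> D" "st_paths E s t \<noteq> {}"
  shows "cost_G a b E s t x =
    Min ((\<lambda>((u, v), \<sigma>). cross_cost a b E s t u v \<sigma> x) ` (crossing_edges E D s t \<times> UNIV))"
proof (rule Min_eqI[symmetric])
  have "finite (crossing_edges E D s t)"
    using \<open>finite E\<close> by (rule rev_finite_subset) (auto simp: crossing_edges_def)
  then show "finite ((\<lambda>((u, v), \<sigma>). cross_cost a b E s t u v \<sigma> x) ` (crossing_edges E D s t \<times> UNIV))"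
    by simp
  show "cost_G a b E s t x \<le> y"
    if "y \<in> (\<lambda>((u, v), \<sigma>). cross_cost a b E s t u v \<sigma> x) ` (crossing_edges E D s t \<times> UNIV)" for y
    using that cost_G_le_cross_cost[OF fin] by auto
  obtain u v \<sigma> where uv: "(u, v) \<in> crossing_edges E D s t"
    and le: "cross_cost a b E s t u v \<sigma> x \<le> cost_G a b E s t x"
    using cross_cost_le_cost_G[OF fin assms(3-5)] by blast
  have "cost_G a b E s t x = cross_cost a b E s t u v \<sigma> x"
    using cost_G_le_cross_cost[OF fin uv] le by (rule antisym)
  with uv show "cost_G a b E s t x \<in> (\<lambda>((u, v), \<sigma>). cross_cost a b E s t u v \<sigma> x) ` (crossing_edges E D s t \<times> UNIV)"
    by (intro image_eqI[of _ _ "((u, v), \<sigma>)"]) auto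
qed

lemma pl_bound_cross_cost:
  fixes a b :: "nat \<Rightarrow> nat \<Rightarrow> real"
  assumes fin: "finite (st_paths E s u)" and ne: "st_paths E s u \<noteq> {}"
    and bounds: "pl_bound (cost_G a b E s u) K" "pl_bound (cost_max a b E s u) K" "pl_bound (cost_G a b E v t) K"
  shows "pl_bound (cross_cost a b E s t u v \<sigma>) (3 * K)"
proof -
  define X where "X = (if \<sigma> then cost_G a b E s u else cost_max a b E s u)"
  have "pl_bound X K"
    using bounds by (simp add: X_def)
  then have "pl_bound (\<lambda>x. a u v * X x + b u v) K"
    by (rule pl_bound_affine_comp)
  moreover have "finite (nonflat_level_set X w) \<and> card (nonflat_level_set X w) \<le> 2" for w
    using nonflat_level_set_concave[OF concave_cost_G[OF fin ne]]
      nonflat_level_set_convex[OF convex_cost_max[OF fin ne]]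
    by (simp add: X_def)
  then have "finite (nonflat_level_set (\<lambda>x. a u v * X x + b u v) w) \<and>
      card (nonflat_level_set (\<lambda>x. a u v * X x + b u v) w) \<le> 2" for w
    by (rule nonflat_level_set_affine_comp)
  ultimately have "pl_bound (\<lambda>x. cost_G a b E v t (a u v * X x + b u v)) (K + 2 * K)"
    using bounds(3) by (intro pl_bound_comp) auto
  moreover have "cross_cost a b E s t u v \<sigma> = (\<lambda>x. cost_G a b E v t (a u v * X x + b u v))"
    by (cases \<sigma>) (simp_all add: fun_eq_iff cross_cost_def X_def)
  ultimately show ?thesis
    by simp
qed

lemma pl_bound_cost_G_cut:
  fixes a b :: "nat \<Rightarrow> nat \<Rightarrow> real"
  assumes fin: "\<And>u v. finite (st_paths E u v)" and "finite E"
    and "s \<in> D" "t \<notin> D" "st_paths E s t \<noteq> {}"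
    and bounds: "\<And>u v. (u, v) \<in> crossing_edges E D s t \<Longrightarrow>
       pl_bound (cost_G a b E s u) K \<and> pl_bound (cost_max a b E s u) K \<and> pl_bound (cost_G a b E v t) K"
  shows "pl_bound (cost_G a b E s t) (2 * card (crossing_edges E D s t) * (3 * K + 1))"
proof -
  let ?C = "crossing_edges E D s t" and ?S = "path_coeffs a b ` st_paths E s t"
  let ?H = "\<lambda>((u, v), \<sigma>). cross_cost a b E s t u v \<sigma>"
  have "pl_bound (?H j) (3 * K)" if "j \<in> ?C \<times> UNIV" for j
  proof -
    obtain u v \<sigma> where j: "j = ((u, v), \<sigma>)"
      by (metis surj_pair)
    with that have "(u, v) \<in> ?C"
      by simp
    then have "st_paths E s u \<noteq> {}"
      by (simp add: crossing_edges_def)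
    with bounds[OF \<open>(u, v) \<in> ?C\<close>] show ?thesis
      using pl_bound_cross_cost[OF fin] by (simp add: j)
  qed
  moreover have "finite ?C"
    using \<open>finite E\<close> by (rule rev_finite_subset) (auto simp: crossing_edges_def)
  moreover have "?C \<noteq> {}"
  proof -
    obtain p where "p \<in> st_paths E s t"
      using assms(5) by blast
    then obtain p1 p2 u v where "p1 \<in> st_paths E s u" "p2 \<in> st_paths E v t" "(u, v) \<in> E" "u \<in> D" "v \<notin> D"
      using st_paths_split assms(3,4) by metis
    then have "(u, v) \<in> ?C"
      by (auto simp: crossing_edges_def)
    then show ?thesis
      by blast
  qed
  moreover have "lower_env ?S x = Min ((\<lambda>j. ?H j x) ` (?C \<times> UNIV))" for x
    using cost_G_split_at_cut[OF fin assms(2-5), of a b x]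
    by (simp add: cost_G_eq_lower_env case_prod_beta)
  moreover have "finite ?S" "?S \<noteq> {}"
    using fin assms(5) by auto
  ultimately have "pl_bound (lower_env ?S) (card (?C \<times> (UNIV :: bool set)) * (3 * K + 1))"
    by (intro pl_bound_lower_env_Min) auto
  moreover have "card (?C \<times> (UNIV :: bool set)) * (3 * K + 1) = 2 * card ?C * (3 * K + 1)"
    by (simp add: card_cartesian_product)
  ultimately show ?thesis
    by (simp add: cost_G_eq_lower_env)
qed

text \<open>
  A cut into two halves of at most 2^k vertices has at most 4^k crossing edges, each giving two
  functions with at most 3 K breakpoints.
\<close>

fun break_bound :: "nat \<Rightarrow> nat" where
  "break_bound 0 = 0"
| "break_bound (Suc k) = 2 * 4 ^ k * (3 * break_bound k + 1)"

lemma break_bound_le_Suc: "break_bound k \<le> break_bound (Suc k)"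
proof -
  have "1 \<le> 2 * (4 :: nat) ^ k"
    by simp
  then have "1 * (3 * break_bound k + 1) \<le> 2 * 4 ^ k * (3 * break_bound k + 1)"
    by (intro mult_right_mono) auto
  then show ?thesis
    by simp
qed

lemma break_bound_plus_one_le: "break_bound k + 1 \<le> 2 ^ (k\<^sup>2 + 2 * k)"
proof (induction k)
  case (Suc k)
  define X Y :: nat where "X = 2 ^ (k\<^sup>2 + 2 * k)" and "Y = 4 ^ k"
  have "Suc k ^ 2 + 2 * Suc k = 3 + 2 * k + (k\<^sup>2 + 2 * k)"
    by (simp add: power2_eq_square)
  then have "(2 :: nat) ^ (Suc k ^ 2 + 2 * Suc k) = 2 ^ 3 * 2 ^ (2 * k) * X"
    by (simp only: X_def power_add)
  also have "\<dots> = 8 * Y * X"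
    by (simp add: Y_def power_mult)
  finally have "(2 :: nat) ^ (Suc k ^ 2 + 2 * Suc k) = 8 * Y * X" .
  moreover have "3 * break_bound k + 1 \<le> 3 * X"
    using Suc.IH by (simp add: X_def)
  then have "2 * Y * (3 * break_bound k + 1) \<le> 2 * Y * (3 * X)"
    by (rule mult_left_mono) simp
  moreover have "1 \<le> Y * X"
    by (simp add: X_def Y_def)
  moreover have "break_bound (Suc k) + 1 = 2 * Y * (3 * break_bound k + 1) + 1"
    by (simp add: Y_def)
  moreover have "2 * Y * (3 * X) = 6 * (Y * X)" "8 * Y * X = 8 * (Y * X)"
    by simp_all
  ultimately show ?case
    by linarith
qed simp

lemma cost_G_without_edges:
  assumes "st_paths {} s t \<noteq> {}"
  shows "cost_G a b {} s t = (\<lambda>x. x)"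
proof -
  have "p = [s]" if "p \<in> st_paths {} s t" for p
    using that by (cases p) (auto simp: st_paths_def)
  then have "st_paths {} s t = {[s]}"
    using assms by blast
  then show ?thesis
    by (simp add: cost_G_def path_cost_def fun_eq_iff)
qed

lemma pl_bound_identity: "pl_bound (\<lambda>x. x) 0"
proof -
  have "\<forall>z\<in>{x..y}. z = 1 * z + 0" for x y :: real
    by simp
  then have "pl_breaks (\<lambda>x. x) {}"
    unfolding pl_breaks_def by blast
  then show ?thesis
    by (rule pl_boundI) simp
qed

lemma card_crossing_edges_le:
  assumes "finite V" "E \<subseteq> V \<times> V" "D \<subseteq> V"
  shows "card (crossing_edges E D s t) \<le> card D * card (V - D)"
proof -
  have "crossing_edges E D s t \<subseteq> D \<times> (V - D)"
    using assms(2) by (auto simp: crossing_edges_def)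
  moreover have "finite (D \<times> (V - D))"
    using assms(1,3) finite_subset by blast
  ultimately show ?thesis
    by (metis card_cartesian_product card_mono)
qed

lemma pl_bound_cost_G_across:
  fixes a b :: "nat \<Rightarrow> nat \<Rightarrow> real"
  assumes V: "finite V" "E \<subseteq> V \<times> V" "acyclic E" "t \<in> V"
    and D: "D \<subseteq> V" "E\<inverse> `` D \<subseteq> D" "s \<in> D" "t \<notin> D" and "st_paths E s t \<noteq> {}"
    and halves: "\<And>W s' t' b'. W = D \<or> W = V - D \<Longrightarrow> s' \<in> W \<Longrightarrow> t' \<in> W \<Longrightarrow> st_paths E s' t' \<noteq> {} \<Longrightarrow>
       (\<And>p. p \<in> st_paths E s' t' \<Longrightarrow> set p \<subseteq> W) \<Longrightarrow> pl_bound (cost_G a b' E s' t') K"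
  shows "pl_bound (cost_G a b E s t) (2 * (card D * card (V - D)) * (3 * K + 1))"
proof -
  have fin: "finite (st_paths E u v)" for u v
    using finite_st_paths V(1-3) by blast
  have succ_closed: "E `` (V - D) \<subseteq> V - D"
    using D(2) V(2) by blast
  have pieces: "pl_bound (cost_G a b' E s u) K \<and> pl_bound (cost_G a b E v t) K"
    if "(u, v) \<in> crossing_edges E D s t" for u v b'
  proof -
    from that have uv: "(u, v) \<in> E" "u \<in> D" "v \<notin> D" "st_paths E s u \<noteq> {}" "st_paths E v t \<noteq> {}"
      by (auto simp: crossing_edges_def)
    have "v \<in> V - D" "t \<in> V - D"
      using uv V(2,4) D(4) by auto
    moreover have "set p \<subseteq> D" if "p \<in> st_paths E s u" for p
      using set_st_path_subset_pred_closed[OF that uv(2) D(2)] .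
    moreover have "set p \<subseteq> V - D" if "p \<in> st_paths E v t" for p
      using set_st_path_subset_succ_closed[OF that \<open>v \<in> V - D\<close> succ_closed] .
    ultimately show ?thesis
      using halves[of D s u b'] halves[of "V - D" v t b] D(3) uv by blast
  qed
  have "pl_bound (cost_G a b E s u) K \<and> pl_bound (cost_max a b E s u) K \<and> pl_bound (cost_G a b E v t) K"
    if "(u, v) \<in> crossing_edges E D s t" for u v
  proof -
    have "st_paths E s u \<noteq> {}"
      using that by (simp add: crossing_edges_def)
    then show ?thesis
      using pieces[OF that, of b] pieces[OF that, of "\<lambda>u v. - b u v"] pl_bound_cost_max[OF fin] by blast
  qed
  moreover have "finite E"
    using V(1,2) finite_subset by blast
  ultimately have "pl_bound (cost_G a b E s t) (2 * card (crossing_edges E D s t) * (3 * K + 1))"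
    using pl_bound_cost_G_cut[OF fin _ D(3,4) assms(9)] by blast
  moreover have "2 * card (crossing_edges E D s t) \<le> 2 * (card D * card (V - D))"
    using card_crossing_edges_le[OF V(1,2) D(1), of s t] by simp
  then have "2 * card (crossing_edges E D s t) * (3 * K + 1) \<le> 2 * (card D * card (V - D)) * (3 * K + 1)"
    by (rule mult_le_mono1)
  ultimately show ?thesis
    by (rule pl_bound_mono)
qed

lemma pl_bound_cost_G_trivial:
  assumes "finite V" "card V \<le> 1" "E \<subseteq> V \<times> V" "acyclic E" "st_paths E s t \<noteq> {}"
  shows "pl_bound (cost_G a b E s t) 0"
proof -
  have "E = {}"
  proof (rule ccontr)
    assume "E \<noteq> {}"
    then obtain x y where xy: "(x, y) \<in> E"
      by auto
    with assms(1-3) have "x = y"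
      using card_le_Suc0_iff_eq[of V] by auto
    with xy assms(4) show False
      by (auto simp: acyclic_def)
  qed
  with assms(5) show ?thesis
    using cost_G_without_edges pl_bound_identity by simp
qed

lemma pl_bound_cost_G_halves:
  fixes a b :: "nat \<Rightarrow> nat \<Rightarrow> real"
  assumes V: "finite V" "E \<subseteq> V \<times> V" "acyclic E" "s \<in> V" "t \<in> V"
    and D: "D \<subseteq> V" "E\<inverse> `` D \<subseteq> D" and "st_paths E s t \<noteq> {}"
    and halves: "\<And>W s' t' b'. W = D \<or> W = V - D \<Longrightarrow> s' \<in> W \<Longrightarrow> t' \<in> W \<Longrightarrow> st_paths E s' t' \<noteq> {} \<Longrightarrow>
       (\<And>p. p \<in> st_paths E s' t' \<Longrightarrow> set p \<subseteq> W) \<Longrightarrow> pl_bound (cost_G a b' E s' t') K"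
  shows "pl_bound (cost_G a b E s t) (max K (2 * (card D * card (V - D)) * (3 * K + 1)))"
proof -
  obtain p where p: "p \<in> st_paths E s t"
    using assms(8) by blast
  then have "s \<in> set p" "t \<in> set p"
    by (auto simp: st_paths_def)
  consider (inside_D) "t \<in> D" | (outside_D) "s \<notin> D" | (across) "s \<in> D" "t \<notin> D"
    by blast
  then show ?thesis
  proof cases
    case inside_D
    with D(2) \<open>s \<in> set p\<close> p have "pl_bound (cost_G a b E s t) K"
      using set_st_path_subset_pred_closed by (intro halves[of D] assms(8)) blast+
    then show ?thesis
      by (rule pl_bound_mono) simp
  next
    case outside_D
    with V(2,4) D(2) have "s \<in> V - D" "E `` (V - D) \<subseteq> V - D"
      by blast+
    with \<open>t \<in> set p\<close> p have "pl_bound (cost_G a b E s t) K"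
      using set_st_path_subset_succ_closed by (intro halves[of "V - D"] assms(8)) blast+
    then show ?thesis
      by (rule pl_bound_mono) simp
  next
    case across
    have "pl_bound (cost_G a b E s t) (2 * (card D * card (V - D)) * (3 * K + 1))"
      by (rule pl_bound_cost_G_across[OF V(1-3,5) D across assms(8) halves])
    then show ?thesis
      by (rule pl_bound_mono) simp
  qed
qed

lemma pl_bound_cost_G:
  fixes a b :: "nat \<Rightarrow> nat \<Rightarrow> real"
  assumes "finite V" "card V \<le> 2 ^ k" "s \<in> V" "t \<in> V" "E \<subseteq> V \<times> V" "acyclic E"
    and "st_paths E s t \<noteq> {}"
  shows "pl_bound (cost_G a b E s t) (break_bound k)"
  using assms
proof (induction k arbitrary: V E s t b)
  case 0
  then show ?case
    using pl_bound_cost_G_trivial by simp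
next
  case (Suc k)
  obtain D where D: "D \<subseteq> V" "card D = min (2 ^ k) (card V)" "E\<inverse> `` D \<subseteq> D"
    using pred_closed_subset_exists[OF Suc.prems(1,5,6), of "min (2 ^ k) (card V)"] by auto
  have "card (V - D) = card V - card D"
    using D(1) Suc.prems(1) finite_subset card_Diff_subset by metis
  then have card_halves: "card D \<le> 2 ^ k" "card (V - D) \<le> 2 ^ k"
    using D(2) Suc.prems(2) by (simp_all add: min_def) linarith
  have halves: "pl_bound (cost_G a b' E s' t') (break_bound k)"
    if "W = D \<or> W = V - D" "s' \<in> W" "t' \<in> W" "st_paths E s' t' \<noteq> {}"
      and inside: "\<And>p. p \<in> st_paths E s' t' \<Longrightarrow> set p \<subseteq> W" for W s' t' b'
  proof -
    have "W \<subseteq> V" "card W \<le> 2 ^ k"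
      using that(1) D(1) card_halves by auto
    moreover have "st_paths (E \<inter> W \<times> W) s' t' \<noteq> {}"
      using that(4) st_paths_restrict[OF inside] by simp
    moreover have "finite W"
      using \<open>W \<subseteq> V\<close> Suc.prems(1) finite_subset by blast
    moreover have "acyclic (E \<inter> W \<times> W)"
      using Suc.prems(6) acyclic_subset by blast
    ultimately have "pl_bound (cost_G a b' (E \<inter> W \<times> W) s' t') (break_bound k)"
      using that(2,3) by (intro Suc.IH) auto
    then show ?thesis
      using cost_G_restrict[OF inside] by simp
  qed
  have "card D * card (V - D) \<le> 2 ^ k * 2 ^ k"
    using card_halves by (rule mult_le_mono)
  then have "card D * card (V - D) \<le> 4 ^ k"
    by (simp flip: power_mult_distrib)
  then have "2 * (card D * card (V - D)) * (3 * break_bound k + 1) \<le> break_bound (Suc k)"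
    unfolding break_bound.simps by (intro mult_le_mono1 mult_le_mono2)
  then have "max (break_bound k) (2 * (card D * card (V - D)) * (3 * break_bound k + 1)) \<le> break_bound (Suc k)"
    using break_bound_le_Suc by simp
  with pl_bound_cost_G_halves[OF Suc.prems(1,5,6,3,4) D(1,3) Suc.prems(7) halves] show ?case
    by (rule pl_bound_mono)
qed

lemma num_pieces_cost_G_le:
  fixes a b :: "nat \<Rightarrow> nat \<Rightarrow> real"
  assumes "finite V" "card V \<le> 2 ^ k" "s \<in> V" "t \<in> V" "E \<subseteq> V \<times> V" "acyclic E"
    and "st_paths E s t \<noteq> {}"
  shows "piecewise_linear (cost_G a b E s t) \<and> num_pieces (cost_G a b E s t) \<le> break_bound k + 1"
proof -
  let ?f = "cost_G a b E s t"
  have "finite (path_coeffs a b ` st_paths E s t)" "path_coeffs a b ` st_paths E s t \<noteq> {}"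
    using assms(1,5-7) finite_st_paths by auto
  then have part: "pl_partition ?f (card (affine_pieces ?f))"
    unfolding cost_G_eq_lower_env by (rule pl_partition_lower_env)
  then have "num_pieces ?f \<le> card (affine_pieces ?f)"
    unfolding num_pieces_def by (rule Least_le)
  also have "\<dots> \<le> break_bound k + 1"
    using card_affine_pieces_le_bound[OF pl_bound_cost_G[OF assms]] by simp
  finally show ?thesis
    using part by (auto simp: piecewise_linear_def)
qed

lemma two_power_le_powr_log:
  fixes n :: nat
  assumes "n > 0"
  shows "real (2 ^ (ceillog2 n ^ 2 + 2 * ceillog2 n)) \<le> real n powr (log 2 (real n) + 8)"
proof -
  define k L where "k = ceillog2 n" and "L = log 2 (real n)"
  have "L \<ge> 0" "real k < L + 1"
    using assms ceillog2_less_log[OF assms] by (simp_all add: k_def L_def)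
  have "real (k\<^sup>2 + 2 * k) \<le> L * (L + 8)"
  proof (cases "k = 0")
    case False
    then have "n \<noteq> 1"
      by (auto simp: k_def)
    with assms have "L \<ge> 1"
      by (simp add: L_def)
    have "real k ^ 2 \<le> (L + 1) ^ 2"
      using \<open>real k < L + 1\<close> by (intro power_mono) auto
    with \<open>real k < L + 1\<close> \<open>L \<ge> 1\<close> show ?thesis
      by (simp add: power2_eq_square algebra_simps)
  qed (use \<open>L \<ge> 0\<close> in simp)
  then have "real (2 ^ (k\<^sup>2 + 2 * k)) \<le> 2 powr (L * (L + 8))"
    by (simp add: powr_realpow[symmetric])
  also have "\<dots> = real n powr (L + 8)"
    using assms by (simp add: powr_powr[symmetric] L_def)
  finally show ?thesis
    by (simp add: k_def L_def)
qed

theorem theorem2: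
  shows "\<exists>C::real. \<forall>(V::nat set) E s t a b.
    finite V \<and> s \<in> V \<and> t \<in> V \<and> E \<subseteq> V \<times> V \<and> acyclic E \<and> st_paths E s t \<noteq> {} \<longrightarrow>
      piecewise_linear (cost_G a b E s t) \<and>
      real (num_pieces (cost_G a b E s t)) \<le> real (card V) powr (log 2 (real (card V)) + C)"
proof (intro exI[of _ 8] allI impI)
  fix V :: "nat set" and E s t and a b :: "nat \<Rightarrow> nat \<Rightarrow> real"
  assume H: "finite V \<and> s \<in> V \<and> t \<in> V \<and> E \<subseteq> V \<times> V \<and> acyclic E \<and> st_paths E s t \<noteq> {}"
  define k where "k = ceillog2 (card V)"
  have "card V > 0"
    using H by (auto simp: card_gt_0_iff)
  then have "card V \<le> 2 ^ k"
    using ceillog2_le_iff[of "card V" k] by (simp add: k_def)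
  with H have pieces: "piecewise_linear (cost_G a b E s t) \<and> num_pieces (cost_G a b E s t) \<le> break_bound k + 1"
    by (intro num_pieces_cost_G_le) auto
  then have "num_pieces (cost_G a b E s t) \<le> 2 ^ (k\<^sup>2 + 2 * k)"
    using break_bound_plus_one_le[of k] by linarith
  then have "real (num_pieces (cost_G a b E s t)) \<le> real (card V) powr (log 2 (real (card V)) + 8)"
    using two_power_le_powr_log[OF \<open>card V > 0\<close>] unfolding k_def by (meson of_nat_le_iff order_trans)
  with pieces show "piecewise_linear (cost_G a b E s t) \<and>
      real (num_pieces (cost_G a b E s t)) \<le> real (card V) powr (log 2 (real (card V)) + 8)"
    by simp
qed

end
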